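(* Let $\Delta=(\mathcal{D},\delta)$ be a program over a clocked basic action theory $\mathcal{D}$, let $K\in\mathbb{N}$ be at least as large as every natural-number constant mentioned in $\mathcal{D}$, and let $\mathcal{T}_\Delta$ be the transition system returned by Algorithm 2 (described in the context) on input $(\mathcal{D},\delta,K)$. Then $\mathcal{T}_\Delta$ contains a state $([\sigma']_{\approx_{\mathcal{D}K}},\delta')$ reachable from $([S_0]_{\approx_{\mathcal{D}K}},\delta)$ with $\mathcal{D}\models\mathrm{Final}(\delta',\sigma')$ if and only if there is a realization of $\Delta$.
   Context: Situation calculus setting: sorts action, situation, object and time (the real numbers); $S_0$ initial situation; $\mathit{do}(a,s)$ the successor situation; $\phi[\sigma]$ is the situation-suppressed formula $\phi$ with situation argument $\sigma$ restored. Fluents are relation or function symbols with last argument a situation and other arguments objects; finitely many fluents, a finite set $\mathcal{A}$ of action types ($A$ has $|A|$ object arguments), finite set $\mathcal{O}$ of object constants (unique names, domain closure). A formula is uniform in $s$ if it mentions no situation term other than $s$ and does not mention $\mathit{Poss}$. A BAT is $\mathcal{D} = \mathcal{D}_0 \cup \mathcal{D}_{poss} \cup \mathcal{D}_{ssa} \cup \mathcal{D}_{ca} \cup \mathcal{D}_{co} \cup \Sigma$ (initial description uniform in $S_0$ with complete information, precondition axioms, successor state axioms, domain closure and unique name axioms for actions and objects, foundational axioms). Clock comparison: $f(\vec x,s)\bowtie v$ or $v\bowtie v'$ ($f$ functional fluent, $v,v'\in\mathbb{N}$, $\bowtie\in\{<,\leq,=,\geq,>\}$). Clocked formula: every atomic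 subformula mentioning a time term is a clock comparison; time-independent: no time term. A BAT is clocked if there is a distinguished action type $\mathit{wait}(t)$ (others have no time argument) and: functional fluents take time values and are $0$ at $S_0$; each functional fluent has successor state axiom $f(\vec o,\mathit{do}(a,s))=y \equiv \exists t\,(a=\mathit{wait}(t)\wedge y=f(\vec o,s)+t) \vee (\neg\exists t\, a=\mathit{wait}(t)) \wedge (\phi_f(\vec o,a,s)\wedge y=0 \vee \neg\phi_f(\vec o,a,s)\wedge y=f(\vec o,s))$ with $\phi_f$ time-independent, uniform in $s$; relational successor state axioms and precondition axioms have clocked right-hand sides uniform in $s$; $\mathit{Poss}(\mathit{wait}(t),s)\equiv\top$. $\mathcal{C}$ is the set of ground situation-suppressed clock (functional fluent) terms; $\nu_\sigma(\omega)=\tau$ iff $\mathcal{D}\models\omega[\sigma]=\tau$; $\nu+\tau$ adds $\tau$ to every value. For $u,v\geq0$: $u\sim_K v$ iff both $>K$, or both $\leq K$ with equal floors and equal ceilings; $\mathrm{fract}(v)=v-\lfloor v\rfloor$ if $v\leq K$, else $0$. $\nu\cong_K\nu'$ iff $\nu(\omega)\sim_K\nu'(\omega)$ for all $\omega$ and $\mathrm{fract}(\nu(\omega))\leq\mathrm{fract}(\nu(\omega'))$ iff $\mathrm{fract}(\nu'(\omega))\leq\mathrm{fract}(\nu'(\omega'))$ for all $\omega,\omega'$. $\sigma_1\approx_{\mathcal{D}K}\sigma_2$ iff they entail the same ground relational fluent atoms and $\nu_{\sigma_1}\cong_K\nu_{\sigma_2}$; $[\sigma]_{\approx_{\mathcal{D}K}}$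 is the class of $\sigma$. $\mathrm{TSuccs}(\nu,K)$ is a computable finite set of nonnegative reals such that for every $\tau\geq0$ there is $\tau'\in\mathrm{TSuccs}(\nu,K)$ with $\nu+\tau\cong_K\nu+\tau'$. Golog: program expressions $\delta ::= \alpha \mid \phi? \mid \delta;\delta \mid \delta|\delta \mid \pi x.\,\delta \mid \delta^* \mid \delta\|\delta$, where action terms are time-suppressed (the program contains $\mathit{wait}()$ without argument), tests $\phi?$ test situation-suppressed clocked formulas, and $\pi x$ chooses an object. $\mathit{nil}:=\mathrm{True}?$. A program is $\Delta=(\mathcal{D},\delta)$. Transition semantics: $\mathrm{Trans}(A(\vec\rho),s,a,\delta',s')\equiv a=A(\vec\rho)\wedge\mathit{Poss}(a,s)\wedge\delta'=\mathit{nil}\wedge s'=\mathit{do}(a,s)$ for $A\neq\mathit{wait}$; $\mathrm{Trans}(\mathit{wait}(),s,a,\delta',s')\equiv\exists t.\,a=\mathit{wait}(t)\wedge\delta'=\mathit{nil}\wedge s'=\mathit{do}(a,s)$; $\mathrm{Trans}(\phi?,s,a,\delta',s')\equiv\mathrm{False}$; $\mathrm{Trans}(\delta_1;\delta_2,s,a,\delta',s')\equiv\exists\gamma(\delta'=(\gamma;\delta_2)\wedge\mathrm{Trans}(\delta_1,s,a,\gamma,s'))\vee\mathrm{Final}(\delta_1,s)\wedge\mathrm{Trans}(\delta_2,s,a,\delta',s')$; $\mathrm{Trans}(\delta_1|\delta_2,\dots)\equiv\mathrm{Trans}(\delta_1,\dots)\vee\mathrm{Trans}(\delta_2,\dots)$;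 $\mathrm{Trans}(\pi x.\delta,s,a,\delta',s')\equiv\exists v.\,\mathrm{Trans}(\delta^x_v,s,a,\delta',s')$; $\mathrm{Trans}(\delta^*,s,a,\delta',s')\equiv\exists\gamma(\delta'=(\gamma;\delta^* )\wedge\mathrm{Trans}(\delta,s,a,\gamma,s'))$; $\mathrm{Trans}(\delta_1\|\delta_2,s,a,\delta',s')\equiv\exists\gamma(\delta'=(\gamma\|\delta_2)\wedge\mathrm{Trans}(\delta_1,s,a,\gamma,s'))\vee\exists\gamma(\delta'=(\delta_1\|\gamma)\wedge\mathrm{Trans}(\delta_2,s,a,\gamma,s'))$. $\mathrm{Final}(\alpha,s)\equiv\mathrm{False}$; $\mathrm{Final}(\phi?,s)\equiv\phi[s]$; $\mathrm{Final}(\delta_1;\delta_2,s)\equiv\mathrm{Final}(\delta_1,s)\wedge\mathrm{Final}(\delta_2,s)$; $\mathrm{Final}(\delta_1|\delta_2,s)\equiv\mathrm{Final}(\delta_1,s)\vee\mathrm{Final}(\delta_2,s)$; $\mathrm{Final}(\pi x.\delta,s)\equiv\exists v.\,\mathrm{Final}(\delta^x_v,s)$; $\mathrm{Final}(\delta^*,s)\equiv\mathrm{True}$; $\mathrm{Final}(\delta_1\|\delta_2,s)\equiv\mathrm{Final}(\delta_1,s)\wedge\mathrm{Final}(\delta_2,s)$. $\mathrm{Trans}^*(\delta,s,\vec a,\delta',s')$ is the reflexive transitive closure of $\mathrm{Trans}$, with $\vec a$ the sequence of actions taken. An action sequence $\vec\alpha=\langle\alpha_1,\dots,\alpha_n\rangle$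 is a realization of $\Delta$ if $\mathcal{D}\models\mathrm{Trans}^*(\delta,S_0,\vec\alpha,\delta',\sigma')\wedge\mathrm{Final}(\delta',\sigma')$ for some $\delta',\sigma'$. Algorithm 2 (input $\mathcal{D},\delta_0,K$): set $\mathit{Open}:=\{(S_0,\delta_0)\}$, $V:=\emptyset$, $E:=\emptyset$. While $\mathit{Open}\neq\emptyset$: remove some $(\sigma,\delta)$ from $\mathit{Open}$; let $\mathit{Acts}:=\{A(\vec\rho)\mid A\in\mathcal{A}\setminus\{\mathit{wait}\},\vec\rho\in\mathcal{O}^{|A|}\}\cup\{\mathit{wait}(\tau)\mid\tau\in\mathrm{TSuccs}(\nu_\sigma,K)\}$; for each $\alpha\in\mathit{Acts}$ and each $(\delta',\sigma')$ with $\mathcal{D}\models\mathrm{Trans}(\delta,\sigma,\alpha,\delta',\sigma')$: if $([\sigma']_{\approx_{\mathcal{D}K}},\delta')\notin V$, add it to $V$ and add $(\sigma',\delta')$ to $\mathit{Open}$; add the edge $(([\sigma]_{\approx_{\mathcal{D}K}},\delta),([\sigma']_{\approx_{\mathcal{D}K}},\delta'))$ to $E$. Return $(V,([S_0]_{\approx_{\mathcal{D}K}},\delta_0),E)$. *)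

theory Defs
  imports Main Complex_Main
begin

section \<open>Clocked formulas (situation-suppressed)\<close>

datatype cmp = CLt | CLe | CEq | CGe | CGt

fun cmp_real :: "cmp \<Rightarrow> real \<Rightarrow> real \<Rightarrow> bool" where
  "cmp_real CLt x y = (x < y)"
| "cmp_real CLe x y = (x \<le> y)"
| "cmp_real CEq x y = (x = y)"
| "cmp_real CGe x y = (x \<ge> y)"
| "cmp_real CGt x y = (x > y)"

datatype ('o, 'v) oterm = Obj 'o | Var 'v

text \<open>Situation-suppressed clocked formulas.  The only atoms mentioning time terms are
  clock comparisons f(x) op v and v op v' with natural-number constants v, v'.\<close>
datatype ('f, 'g, 'o, 'v) fm =
    FTrue
  | Rel 'f "('o, 'v) oterm list"
  | OEq "('o, 'v) oterm" "('o, 'v) oterm"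
  | Clk 'g "('o, 'v) oterm list" cmp nat
  | NumCmp nat cmp nat
  | Neg "('f, 'g, 'o, 'v) fm"
  | Conj "('f, 'g, 'o, 'v) fm" "('f, 'g, 'o, 'v) fm"
  | Disj "('f, 'g, 'o, 'v) fm" "('f, 'g, 'o, 'v) fm"
  | Ex 'v "('f, 'g, 'o, 'v) fm"

text \<open>The values of all ground fluents in a situation: relational fluents and clocks
  (ground functional fluent terms).\<close>
type_synonym ('f, 'g, 'o) state = "('f \<Rightarrow> 'o list \<Rightarrow> bool) \<times> ('g \<times> 'o list \<Rightarrow> real)"

fun teval :: "('v \<Rightarrow> 'o) \<Rightarrow> ('o, 'v) oterm \<Rightarrow> 'o" where
  "teval env (Obj o') = o'"
| "teval env (Var x) = env x"

fun holds :: "'o set \<Rightarrow> ('f, 'g, 'o) state \<Rightarrow> ('v \<Rightarrow> 'o) \<Rightarrow> ('f, 'g, 'o, 'v) fm \<Rightarrow> bool" where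
  "holds Ob st env FTrue = True"
| "holds Ob st env (Rel F ts) = fst st F (map (teval env) ts)"
| "holds Ob st env (OEq t1 t2) = (teval env t1 = teval env t2)"
| "holds Ob st env (Clk g ts c v) = cmp_real c (snd st (g, map (teval env) ts)) (real v)"
| "holds Ob st env (NumCmp v c v') = cmp_real c (real v) (real v')"
| "holds Ob st env (Neg \<phi>) = (\<not> holds Ob st env \<phi>)"
| "holds Ob st env (Conj \<phi> \<psi>) = (holds Ob st env \<phi> \<and> holds Ob st env \<psi>)"
| "holds Ob st env (Disj \<phi> \<psi>) = (holds Ob st env \<phi> \<or> holds Ob st env \<psi>)"
| "holds Ob st env (Ex x \<phi>) = (\<exists>o'\<in>Ob. holds Ob st (env(x := o')) \<phi>)"

fun fv_t :: "('o, 'v) oterm \<Rightarrow> 'v set" where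
  "fv_t (Obj _) = {}"
| "fv_t (Var x) = {x}"

fun consts_t :: "('o, 'v) oterm \<Rightarrow> 'o set" where
  "consts_t (Obj o') = {o'}"
| "consts_t (Var _) = {}"

fun fv_fm :: "('f, 'g, 'o, 'v) fm \<Rightarrow> 'v set" where
  "fv_fm FTrue = {}"
| "fv_fm (Rel F ts) = (\<Union>t\<in>set ts. fv_t t)"
| "fv_fm (OEq t1 t2) = fv_t t1 \<union> fv_t t2"
| "fv_fm (Clk g ts c v) = (\<Union>t\<in>set ts. fv_t t)"
| "fv_fm (NumCmp v c v') = {}"
| "fv_fm (Neg \<phi>) = fv_fm \<phi>"
| "fv_fm (Conj \<phi> \<psi>) = fv_fm \<phi> \<union> fv_fm \<psi>"
| "fv_fm (Disj \<phi> \<psi>) = fv_fm \<phi> \<union> fv_fm \<psi>"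
| "fv_fm (Ex x \<phi>) = fv_fm \<phi> - {x}"

fun nums_fm :: "('f, 'g, 'o, 'v) fm \<Rightarrow> nat set" where
  "nums_fm (Clk g ts c v) = {v}"
| "nums_fm (NumCmp v c v') = {v, v'}"
| "nums_fm (Neg \<phi>) = nums_fm \<phi>"
| "nums_fm (Conj \<phi> \<psi>) = nums_fm \<phi> \<union> nums_fm \<psi>"
| "nums_fm (Disj \<phi> \<psi>) = nums_fm \<phi> \<union> nums_fm \<psi>"
| "nums_fm (Ex x \<phi>) = nums_fm \<phi>"
| "nums_fm _ = {}"

fun time_indep :: "('f, 'g, 'o, 'v) fm \<Rightarrow> bool" where
  "time_indep (Clk g ts c v) = False"
| "time_indep (NumCmp v c v') = False"
| "time_indep (Neg \<phi>) = time_indep \<phi>"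
| "time_indep (Conj \<phi> \<psi>) = (time_indep \<phi> \<and> time_indep \<psi>)"
| "time_indep (Disj \<phi> \<psi>) = (time_indep \<phi> \<and> time_indep \<psi>)"
| "time_indep (Ex x \<phi>) = time_indep \<phi>"
| "time_indep _ = True"

section \<open>Clocked basic action theories\<close>

text \<open>A clocked BAT, given semantically through its (ground-instantiated) axioms.
  Objects: the finite set objs (domain closure + unique names).
  poss A os: right-hand side of the precondition axiom of "A(os)".
  ssa (Some (A, os)) F xs: right-hand side of the successor state axiom of
  "F(xs)" for action "A(os)"; "ssa None F xs": the same for the
  action "wait(t)" (cannot depend on t, since clocked formulas may not
  mention the time term t).
  reset A os g xs: the time-independent condition \<phi>_g under which action
  "A(os)" resets clock "g(xs)".\<close>
record ('f, 'g, 'a, 'o, 'v) bat =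
  objs :: "'o set"
  rfl :: "'f set"
  ffl :: "'g set"
  atypes :: "'a set"
  rar :: "'f \<Rightarrow> nat"
  far :: "'g \<Rightarrow> nat"
  aar :: "'a \<Rightarrow> nat"
  init :: "'f \<Rightarrow> 'o list \<Rightarrow> bool"
  poss :: "'a \<Rightarrow> 'o list \<Rightarrow> ('f, 'g, 'o, 'v) fm"
  ssa :: "('a \<times> 'o list) option \<Rightarrow> 'f \<Rightarrow> 'o list \<Rightarrow> ('f, 'g, 'o, 'v) fm"
  reset :: "'a \<Rightarrow> 'o list \<Rightarrow> 'g \<Rightarrow> 'o list \<Rightarrow> ('f, 'g, 'o, 'v) fm"

datatype ('a, 'o) action = Act 'a "'o list" | Wait real

text \<open>Ground situations: "do(a, s)" is "a # s", S0 is "[]".\<close>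
type_synonym ('a, 'o) sit = "('a, 'o) action list"

definition args :: "('f, 'g, 'a, 'o, 'v) bat \<Rightarrow> nat \<Rightarrow> 'o list set" where
  "args D n = {os. set os \<subseteq> objs D \<and> length os = n}"

definition clocks :: "('f, 'g, 'a, 'o, 'v) bat \<Rightarrow> ('g \<times> 'o list) set" where
  "clocks D = {(g, os). g \<in> ffl D \<and> os \<in> args D (far D g)}"

definition env0 :: "'v \<Rightarrow> 'o" where "env0 = (\<lambda>_. undefined)"

fun step :: "('f, 'g, 'a, 'o, 'v) bat \<Rightarrow> ('a, 'o) action \<Rightarrow> ('f, 'g, 'o) state \<Rightarrow> ('f, 'g, 'o) state" where
  "step D (Act A os) st =
     ((\<lambda>F xs. holds (objs D) st env0 (ssa D (Some (A, os)) F xs)),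
      (\<lambda>(g, xs). if holds (objs D) st env0 (reset D A os g xs) then 0 else snd st (g, xs)))"
| "step D (Wait t) st =
     ((\<lambda>F xs. holds (objs D) st env0 (ssa D None F xs)),
      (\<lambda>\<omega>. snd st \<omega> + t))"

text \<open>The (unique) values of all ground fluents at a ground situation, as entailed by D
  (complete initial information; functional fluents are 0 at S0).\<close>
primrec st :: "('f, 'g, 'a, 'o, 'v) bat \<Rightarrow> ('a, 'o) sit \<Rightarrow> ('f, 'g, 'o) state" where
  "st D [] = (init D, \<lambda>_. 0)"
| "st D (a # s) = step D a (st D s)"

definition models :: "('f, 'g, 'a, 'o, 'v) bat \<Rightarrow> ('f, 'g, 'o, 'v) fm \<Rightarrow> ('a, 'o) sit \<Rightarrow> bool" where
  "models D \<phi> \<sigma> = holds (objs D) (st D \<sigma>) env0 \<phi>"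

definition val :: "('f, 'g, 'a, 'o, 'v) bat \<Rightarrow> ('a, 'o) sit \<Rightarrow> ('g \<times> 'o list \<Rightarrow> real)" where
  "val D \<sigma> = snd (st D \<sigma>)"

fun wf_t :: "('f, 'g, 'a, 'o, 'v) bat \<Rightarrow> ('o, 'v) oterm \<Rightarrow> bool" where
  "wf_t D (Obj o') = (o' \<in> objs D)"
| "wf_t D (Var x) = True"

fun wf_fm :: "('f, 'g, 'a, 'o, 'v) bat \<Rightarrow> ('f, 'g, 'o, 'v) fm \<Rightarrow> bool" where
  "wf_fm D FTrue = True"
| "wf_fm D (Rel F ts) = (F \<in> rfl D \<and> length ts = rar D F \<and> (\<forall>t\<in>set ts. wf_t D t))"
| "wf_fm D (OEq t1 t2) = (wf_t D t1 \<and> wf_t D t2)"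
| "wf_fm D (Clk g ts c v) = (g \<in> ffl D \<and> length ts = far D g \<and> (\<forall>t\<in>set ts. wf_t D t))"
| "wf_fm D (NumCmp v c v') = True"
| "wf_fm D (Neg \<phi>) = wf_fm D \<phi>"
| "wf_fm D (Conj \<phi> \<psi>) = (wf_fm D \<phi> \<and> wf_fm D \<psi>)"
| "wf_fm D (Disj \<phi> \<psi>) = (wf_fm D \<phi> \<and> wf_fm D \<psi>)"
| "wf_fm D (Ex x \<phi>) = wf_fm D \<phi>"

definition closed_wf :: "('f, 'g, 'a, 'o, 'v) bat \<Rightarrow> ('f, 'g, 'o, 'v) fm \<Rightarrow> bool" where
  "closed_wf D \<phi> = (wf_fm D \<phi> \<and> fv_fm \<phi> = {})"

definition clocked_bat :: "('f, 'g, 'a, 'o, 'v) bat \<Rightarrow> bool" where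
  "clocked_bat D =
    (finite (objs D) \<and> finite (rfl D) \<and> finite (ffl D) \<and> finite (atypes D) \<and>
     (\<forall>A\<in>atypes D. \<forall>os\<in>args D (aar D A). closed_wf D (poss D A os)) \<and>
     (\<forall>F\<in>rfl D. \<forall>xs\<in>args D (rar D F).
        closed_wf D (ssa D None F xs) \<and>
        (\<forall>A\<in>atypes D. \<forall>os\<in>args D (aar D A). closed_wf D (ssa D (Some (A, os)) F xs))) \<and>
     (\<forall>g\<in>ffl D. \<forall>xs\<in>args D (far D g). \<forall>A\<in>atypes D. \<forall>os\<in>args D (aar D A).
        closed_wf D (reset D A os g xs) \<and> time_indep (reset D A os g xs)))"

definition bat_nums :: "('f, 'g, 'a, 'o, 'v) bat \<Rightarrow> nat set" where
  "bat_nums D =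
    (\<Union>A\<in>atypes D. \<Union>os\<in>args D (aar D A). nums_fm (poss D A os)) \<union>
    (\<Union>F\<in>rfl D. \<Union>xs\<in>args D (rar D F). nums_fm (ssa D None F xs) \<union>
        (\<Union>A\<in>atypes D. \<Union>os\<in>args D (aar D A). nums_fm (ssa D (Some (A, os)) F xs))) \<union>
    (\<Union>g\<in>ffl D. \<Union>xs\<in>args D (far D g). \<Union>A\<in>atypes D. \<Union>os\<in>args D (aar D A).
        nums_fm (reset D A os g xs))"

section \<open>Golog programs\<close>

datatype ('f, 'g, 'a, 'o, 'v) prog =
    PAct 'a "('o, 'v) oterm list"     \<comment> \<open>primitive action A(\<rho>), A \<noteq> wait\<close>
  | PWait
  | Test "('f, 'g, 'o, 'v) fm"
  | Seq "('f, 'g, 'a, 'o, 'v) prog" "('f, 'g, 'a, 'o, 'v) prog"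
  | Choice "('f, 'g, 'a, 'o, 'v) prog" "('f, 'g, 'a, 'o, 'v) prog"
  | Pi 'v "('f, 'g, 'a, 'o, 'v) prog"
  | Star "('f, 'g, 'a, 'o, 'v) prog"
  | Conc "('f, 'g, 'a, 'o, 'v) prog" "('f, 'g, 'a, 'o, 'v) prog"

definition Nil_prog :: "('f, 'g, 'a, 'o, 'v) prog" where "Nil_prog = Test FTrue"

fun subst_t :: "'v \<Rightarrow> 'o \<Rightarrow> ('o, 'v) oterm \<Rightarrow> ('o, 'v) oterm" where
  "subst_t x v (Obj o') = Obj o'"
| "subst_t x v (Var y) = (if y = x then Obj v else Var y)"

fun subst_fm :: "'v \<Rightarrow> 'o \<Rightarrow> ('f, 'g, 'o, 'v) fm \<Rightarrow> ('f, 'g, 'o, 'v) fm" where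
  "subst_fm x v FTrue = FTrue"
| "subst_fm x v (Rel F ts) = Rel F (map (subst_t x v) ts)"
| "subst_fm x v (OEq t1 t2) = OEq (subst_t x v t1) (subst_t x v t2)"
| "subst_fm x v (Clk g ts c n) = Clk g (map (subst_t x v) ts) c n"
| "subst_fm x v (NumCmp n c n') = NumCmp n c n'"
| "subst_fm x v (Neg \<phi>) = Neg (subst_fm x v \<phi>)"
| "subst_fm x v (Conj \<phi> \<psi>) = Conj (subst_fm x v \<phi>) (subst_fm x v \<psi>)"
| "subst_fm x v (Disj \<phi> \<psi>) = Disj (subst_fm x v \<phi>) (subst_fm x v \<psi>)"
| "subst_fm x v (Ex y \<phi>) = (if y = x then Ex y \<phi> else Ex y (subst_fm x v \<phi>))"

fun subst_p :: "'v \<Rightarrow> 'o \<Rightarrow> ('f, 'g, 'a, 'o, 'v) prog \<Rightarrow> ('f, 'g, 'a, 'o, 'v) prog" where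
  "subst_p x v (PAct A ts) = PAct A (map (subst_t x v) ts)"
| "subst_p x v PWait = PWait"
| "subst_p x v (Test \<phi>) = Test (subst_fm x v \<phi>)"
| "subst_p x v (Seq p q) = Seq (subst_p x v p) (subst_p x v q)"
| "subst_p x v (Choice p q) = Choice (subst_p x v p) (subst_p x v q)"
| "subst_p x v (Pi y p) = (if y = x then Pi y p else Pi y (subst_p x v p))"
| "subst_p x v (Star p) = Star (subst_p x v p)"
| "subst_p x v (Conc p q) = Conc (subst_p x v p) (subst_p x v q)"

primrec psize :: "('f, 'g, 'a, 'o, 'v) prog \<Rightarrow> nat" where
  "psize (PAct A ts) = 1"
| "psize PWait = 1"
| "psize (Test \<phi>) = 1"
| "psize (Seq p q) = psize p + psize q + 1"
| "psize (Choice p q) = psize p + psize q + 1"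
| "psize (Pi y p) = psize p + 1"
| "psize (Star p) = psize p + 1"
| "psize (Conc p q) = psize p + psize q + 1"

lemma psize_subst_p [simp]: "psize (subst_p x v p) = psize p"
  by (induction p) auto

function final :: "('f, 'g, 'a, 'o, 'v) bat \<Rightarrow> ('f, 'g, 'a, 'o, 'v) prog \<Rightarrow> ('a, 'o) sit \<Rightarrow> bool" where
  "final D (PAct A ts) s = False"
| "final D PWait s = False"
| "final D (Test \<phi>) s = models D \<phi> s"
| "final D (Seq p q) s = (final D p s \<and> final D q s)"
| "final D (Choice p q) s = (final D p s \<or> final D q s)"
| "final D (Pi x p) s = (\<exists>v\<in>objs D. final D (subst_p x v p) s)"
| "final D (Star p) s = True"
| "final D (Conc p q) s = (final D p s \<and> final D q s)"
  by pat_completeness auto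
termination by (relation "measure (\<lambda>(D, p, s). psize p)") auto

function trans :: "('f, 'g, 'a, 'o, 'v) bat \<Rightarrow> ('f, 'g, 'a, 'o, 'v) prog \<Rightarrow> ('a, 'o) sit \<Rightarrow>
    ('a, 'o) action \<Rightarrow> ('f, 'g, 'a, 'o, 'v) prog \<Rightarrow> ('a, 'o) sit \<Rightarrow> bool" where
  "trans D (PAct A ts) s a p' s' =
     (\<exists>os. ts = map Obj os \<and> a = Act A os \<and> models D (poss D A os) s \<and> p' = Nil_prog \<and> s' = a # s)"
| "trans D PWait s a p' s' = (\<exists>t\<ge>0. a = Wait t \<and> p' = Nil_prog \<and> s' = a # s)"
| "trans D (Test \<phi>) s a p' s' = False"
| "trans D (Seq p q) s a p' s' =
     ((\<exists>\<gamma>. p' = Seq \<gamma> q \<and> trans D p s a \<gamma> s') \<or> (final D p s \<and> trans D q s a p' s'))"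
| "trans D (Choice p q) s a p' s' = (trans D p s a p' s' \<or> trans D q s a p' s')"
| "trans D (Pi x p) s a p' s' = (\<exists>v\<in>objs D. trans D (subst_p x v p) s a p' s')"
| "trans D (Star p) s a p' s' = (\<exists>\<gamma>. p' = Seq \<gamma> (Star p) \<and> trans D p s a \<gamma> s')"
| "trans D (Conc p q) s a p' s' =
     ((\<exists>\<gamma>. p' = Conc \<gamma> q \<and> trans D p s a \<gamma> s') \<or> (\<exists>\<gamma>. p' = Conc p \<gamma> \<and> trans D q s a \<gamma> s'))"
  by pat_completeness auto
termination by (relation "measure (\<lambda>(D, p, s, a, p', s'). psize p)") auto

text \<open>Trans*, with the list of actions taken (in execution order).\<close>
inductive trans_star :: "('f, 'g, 'a, 'o, 'v) bat \<Rightarrow> ('f, 'g, 'a, 'o, 'v) prog \<Rightarrow> ('a, 'o) sit \<Rightarrow>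
    ('a, 'o) action list \<Rightarrow> ('f, 'g, 'a, 'o, 'v) prog \<Rightarrow> ('a, 'o) sit \<Rightarrow> bool"
  for D where
  refl: "trans_star D p s [] p s"
| step: "trans D p s a q s1 \<Longrightarrow> trans_star D q s1 as p' s' \<Longrightarrow> trans_star D p s (a # as) p' s'"

definition realization :: "('f, 'g, 'a, 'o, 'v) bat \<Rightarrow> ('f, 'g, 'a, 'o, 'v) prog \<Rightarrow>
    ('a, 'o) action list \<Rightarrow> bool" where
  "realization D p as = (\<exists>p' \<sigma>'. trans_star D p [] as p' \<sigma>' \<and> final D p' \<sigma>')"

fun fv_p :: "('f, 'g, 'a, 'o, 'v) prog \<Rightarrow> 'v set" where
  "fv_p (PAct A ts) = (\<Union>t\<in>set ts. fv_t t)"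
| "fv_p PWait = {}"
| "fv_p (Test \<phi>) = fv_fm \<phi>"
| "fv_p (Seq p q) = fv_p p \<union> fv_p q"
| "fv_p (Choice p q) = fv_p p \<union> fv_p q"
| "fv_p (Pi x p) = fv_p p - {x}"
| "fv_p (Star p) = fv_p p"
| "fv_p (Conc p q) = fv_p p \<union> fv_p q"

fun wf_p :: "('f, 'g, 'a, 'o, 'v) bat \<Rightarrow> ('f, 'g, 'a, 'o, 'v) prog \<Rightarrow> bool" where
  "wf_p D (PAct A ts) = (A \<in> atypes D \<and> length ts = aar D A \<and> (\<forall>t\<in>set ts. wf_t D t))"
| "wf_p D PWait = True"
| "wf_p D (Test \<phi>) = wf_fm D \<phi>"
| "wf_p D (Seq p q) = (wf_p D p \<and> wf_p D q)"
| "wf_p D (Choice p q) = (wf_p D p \<and> wf_p D q)"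
| "wf_p D (Pi x p) = wf_p D p"
| "wf_p D (Star p) = wf_p D p"
| "wf_p D (Conc p q) = (wf_p D p \<and> wf_p D q)"

definition program :: "('f, 'g, 'a, 'o, 'v) bat \<Rightarrow> ('f, 'g, 'a, 'o, 'v) prog \<Rightarrow> bool" where
  "program D p = (wf_p D p \<and> fv_p p = {})"

fun nums_p :: "('f, 'g, 'a, 'o, 'v) prog \<Rightarrow> nat set" where
  "nums_p (Test \<phi>) = nums_fm \<phi>"
| "nums_p (Seq p q) = nums_p p \<union> nums_p q"
| "nums_p (Choice p q) = nums_p p \<union> nums_p q"
| "nums_p (Pi x p) = nums_p p"
| "nums_p (Star p) = nums_p p"
| "nums_p (Conc p q) = nums_p p \<union> nums_p q"
| "nums_p _ = {}"

section \<open>Clock regions and situation equivalence\<close>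

definition sim_K :: "nat \<Rightarrow> real \<Rightarrow> real \<Rightarrow> bool" where
  "sim_K K u v = ((u > real K \<and> v > real K) \<or>
     (u \<le> real K \<and> v \<le> real K \<and> \<lfloor>u\<rfloor> = \<lfloor>v\<rfloor> \<and> \<lceil>u\<rceil> = \<lceil>v\<rceil>))"

definition fract_K :: "nat \<Rightarrow> real \<Rightarrow> real" where
  "fract_K K v = (if v \<le> real K then v - real_of_int \<lfloor>v\<rfloor> else 0)"

definition reg_eq :: "('c set) \<Rightarrow> nat \<Rightarrow> ('c \<Rightarrow> real) \<Rightarrow> ('c \<Rightarrow> real) \<Rightarrow> bool" where
  "reg_eq C K \<nu> \<nu>' =
    ((\<forall>\<omega>\<in>C. sim_K K (\<nu> \<omega>) (\<nu>' \<omega>)) \<and>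
     (\<forall>\<omega>\<in>C. \<forall>\<omega>'\<in>C. (fract_K K (\<nu> \<omega>) \<le> fract_K K (\<nu> \<omega>')) \<longleftrightarrow>
                      (fract_K K (\<nu>' \<omega>) \<le> fract_K K (\<nu>' \<omega>'))))"

definition vplus :: "('c \<Rightarrow> real) \<Rightarrow> real \<Rightarrow> ('c \<Rightarrow> real)" where
  "vplus \<nu> \<tau> = (\<lambda>\<omega>. \<nu> \<omega> + \<tau>)"

definition sit_eq :: "('f, 'g, 'a, 'o, 'v) bat \<Rightarrow> nat \<Rightarrow> ('a, 'o) sit \<Rightarrow> ('a, 'o) sit \<Rightarrow> bool" where
  "sit_eq D K \<sigma>1 \<sigma>2 =
    ((\<forall>F\<in>rfl D. \<forall>xs\<in>args D (rar D F). fst (st D \<sigma>1) F xs = fst (st D \<sigma>2) F xs) \<and>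
     reg_eq (clocks D) K (val D \<sigma>1) (val D \<sigma>2))"

definition cls :: "('f, 'g, 'a, 'o, 'v) bat \<Rightarrow> nat \<Rightarrow> ('a, 'o) sit \<Rightarrow> ('a, 'o) sit set" where
  "cls D K \<sigma> = {\<sigma>'. sit_eq D K \<sigma> \<sigma>'}"

text \<open>Specification of TSuccs (a finite set of nonnegative reals representing all regions
  reachable by letting time elapse).\<close>
definition tsuccs_spec :: "('f, 'g, 'a, 'o, 'v) bat \<Rightarrow> (('g \<times> 'o list \<Rightarrow> real) \<Rightarrow> nat \<Rightarrow> real set) \<Rightarrow> bool" where
  "tsuccs_spec D TS =
    (\<forall>\<nu> K. (\<forall>\<omega>\<in>clocks D. \<nu> \<omega> \<ge> 0) \<longrightarrow>
       finite (TS \<nu> K) \<and> (\<forall>\<tau>\<in>TS \<nu> K. \<tau> \<ge> 0) \<and>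
       (\<forall>\<tau>\<ge>0. \<exists>\<tau>'\<in>TS \<nu> K. reg_eq (clocks D) K (vplus \<nu> \<tau>) (vplus \<nu> \<tau>')))"

section \<open>Algorithm 2\<close>

type_synonym ('f, 'g, 'a, 'o, 'v) tstate = "('a, 'o) sit set \<times> ('f, 'g, 'a, 'o, 'v) prog"

definition acts :: "('f, 'g, 'a, 'o, 'v) bat \<Rightarrow> nat \<Rightarrow> (('g \<times> 'o list \<Rightarrow> real) \<Rightarrow> nat \<Rightarrow> real set) \<Rightarrow>
    ('a, 'o) sit \<Rightarrow> ('a, 'o) action set" where
  "acts D K TS \<sigma> = {Act A os | A os. A \<in> atypes D \<and> os \<in> args D (aar D A)} \<union>
                    {Wait \<tau> | \<tau>. \<tau> \<in> TS (val D \<sigma>) K}"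

definition succs :: "('f, 'g, 'a, 'o, 'v) bat \<Rightarrow> nat \<Rightarrow> (('g \<times> 'o list \<Rightarrow> real) \<Rightarrow> nat \<Rightarrow> real set) \<Rightarrow>
    ('a, 'o) sit \<Rightarrow> ('f, 'g, 'a, 'o, 'v) prog \<Rightarrow> (('f, 'g, 'a, 'o, 'v) prog \<times> ('a, 'o) sit) set" where
  "succs D K TS \<sigma> p = {(p', \<sigma>'). \<exists>\<alpha>\<in>acts D K TS \<sigma>. trans D p \<sigma> \<alpha> p' \<sigma>'}"

text \<open>Configurations of Algorithm 2: (Open, V, E, current outer-loop item with the
  successor pairs still to be processed by the inner loop).\<close>
type_synonym ('f, 'g, 'a, 'o, 'v) aconf =
  "(('a, 'o) sit \<times> ('f, 'g, 'a, 'o, 'v) prog) set \<times>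
   ('f, 'g, 'a, 'o, 'v) tstate set \<times>
   (('f, 'g, 'a, 'o, 'v) tstate \<times> ('f, 'g, 'a, 'o, 'v) tstate) set \<times>
   (('a, 'o) sit \<times> ('f, 'g, 'a, 'o, 'v) prog \<times> (('f, 'g, 'a, 'o, 'v) prog \<times> ('a, 'o) sit) set) option"

inductive alg_step :: "('f, 'g, 'a, 'o, 'v) bat \<Rightarrow> nat \<Rightarrow> (('g \<times> 'o list \<Rightarrow> real) \<Rightarrow> nat \<Rightarrow> real set) \<Rightarrow>
    ('f, 'g, 'a, 'o, 'v) aconf \<Rightarrow> ('f, 'g, 'a, 'o, 'v) aconf \<Rightarrow> bool"
  for D K TS where
  pick: "(\<sigma>, p) \<in> Opn \<Longrightarrow>
     alg_step D K TS (Opn, V, E, None) (Opn - {(\<sigma>, p)}, V, E, Some (\<sigma>, p, succs D K TS \<sigma> p))"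
| process: "(p', \<sigma>') \<in> R \<Longrightarrow>
     alg_step D K TS (Opn, V, E, Some (\<sigma>, p, R))
       (if (cls D K \<sigma>', p') \<notin> V then Opn \<union> {(\<sigma>', p')} else Opn,
        V \<union> {(cls D K \<sigma>', p')},
        E \<union> {((cls D K \<sigma>, p), (cls D K \<sigma>', p'))},
        Some (\<sigma>, p, R - {(p', \<sigma>')}))"
| finish: "alg_step D K TS (Opn, V, E, Some (\<sigma>, p, {})) (Opn, V, E, None)"

text \<open>(V, init, E) is a transition system returned by (some run of) Algorithm 2 on
  input (D, \<delta>0, K).\<close>
definition alg2_returns :: "('f, 'g, 'a, 'o, 'v) bat \<Rightarrow> nat \<Rightarrow> (('g \<times> 'o list \<Rightarrow> real) \<Rightarrow> nat \<Rightarrow> real set) \<Rightarrow>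
    ('f, 'g, 'a, 'o, 'v) prog \<Rightarrow> ('f, 'g, 'a, 'o, 'v) tstate set \<Rightarrow> ('f, 'g, 'a, 'o, 'v) tstate \<Rightarrow>
    (('f, 'g, 'a, 'o, 'v) tstate \<times> ('f, 'g, 'a, 'o, 'v) tstate) set \<Rightarrow> bool" where
  "alg2_returns D K TS p0 V q0 E =
    (q0 = (cls D K [], p0) \<and>
     (alg_step D K TS)\<^sup>*\<^sup>* ({([], p0)}, {}, {}, None) ({}, V, E, None))"

end

theory Submission
  imports Defs
begin

(* Region equivalence is a bisimulation for the transition semantics. Two situations in the
   same class satisfy the same clocked formulas with constants at most K, so they agree on the
   preconditions, on Final and on the successor state axioms; and by the classical region argument
   of timed automata, every delay from one of them is matched by a delay from the other that leads
   to the same region again. Edges of the graph built by Algorithm 2 come from concrete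
   transitions, so an abstract path from the initial state can be replayed from S0. Conversely,
   when the algorithm terminates every visited state has a representative all of whose successors
   (with delays taken from TSuccs) were visited, so each concrete run is tracked by a path. *)

section \<open>Clock regions\<close>

lemma sim_K_iff_frac:
  "sim_K K u v \<longleftrightarrow> (real K < u \<and> real K < v) \<or>
     (u \<le> real K \<and> v \<le> real K \<and> \<lfloor>u\<rfloor> = \<lfloor>v\<rfloor> \<and> (frac u = 0 \<longleftrightarrow> frac v = 0))"
proof -
  have "\<lceil>x\<rceil> = \<lfloor>x\<rfloor> + (if frac x = 0 then 0 else 1)" for x :: real
    by (simp add: ceiling_altdef frac_def del: frac_eq_0_iff)
  then show ?thesis
    unfolding sim_K_def by (auto split: if_splits)
qed

lemma le_of_int_iff_floor_frac:
  "u \<le> real_of_int k \<longleftrightarrow> \<lfloor>u\<rfloor> < k \<or> (\<lfloor>u\<rfloor> = k \<and> frac u = 0)"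
proof -
  have "u = of_int \<lfloor>u\<rfloor> + frac u" "0 \<le> frac u" "frac u < 1"
    using frac_lt_1[of u] by (simp_all add: frac_def)
  then show ?thesis
    by (smt (verit) of_int_less_iff floor_less_iff floor_of_int)
qed

lemma sim_K_refl: "sim_K K u u"
  by (auto simp: sim_K_def)

lemma sim_K_sym: "sim_K K u v \<Longrightarrow> sim_K K v u"
  by (auto simp: sim_K_def)

lemma sim_K_trans: "sim_K K u v \<Longrightarrow> sim_K K v w \<Longrightarrow> sim_K K u w"
  by (auto simp: sim_K_def)

lemma sim_K_nonneg:
  assumes "sim_K K u v" "0 \<le> u"
  shows "0 \<le> v"
proof (cases "real K < v")
  case True
  then show ?thesis
    using of_nat_0_le_iff[of K] by linarith
next
  case False
  then have "\<lfloor>u\<rfloor> = \<lfloor>v\<rfloor>"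
    using assms(1) unfolding sim_K_def by auto
  then show ?thesis
    using assms(2) zero_le_floor by metis
qed

lemma fract_K_eq_frac: "fract_K K v = (if v \<le> real K then frac v else 0)"
  by (simp add: fract_K_def frac_def)

lemma fract_K_bounds: "0 \<le> fract_K K v" "fract_K K v < 1"
  by (simp_all add: fract_K_eq_frac frac_lt_1)

lemma fract_K_le_0_iff: "fract_K K v \<le> 0 \<longleftrightarrow> real K < v \<or> frac v = 0"
  using frac_ge_0[of v] unfolding fract_K_eq_frac by (auto simp del: frac_eq_0_iff frac_ge_0)

lemma sim_K_fract_K_le_0: "sim_K K u v \<Longrightarrow> fract_K K u \<le> 0 \<longleftrightarrow> fract_K K v \<le> 0"
  unfolding fract_K_le_0_iff sim_K_iff_frac by (auto simp del: frac_eq_0_iff)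

lemma reg_eq_refl: "reg_eq C K \<nu> \<nu>"
  by (auto simp: reg_eq_def sim_K_refl)

lemma reg_eq_sym: "reg_eq C K \<nu> \<nu>' \<Longrightarrow> reg_eq C K \<nu>' \<nu>"
  by (auto simp: reg_eq_def sim_K_sym)

lemma reg_eq_trans: "reg_eq C K \<nu>1 \<nu>2 \<Longrightarrow> reg_eq C K \<nu>2 \<nu>3 \<Longrightarrow> reg_eq C K \<nu>1 \<nu>3"
  unfolding reg_eq_def by (meson sim_K_trans)

lemma reg_eq_cong:
  "(\<And>\<omega>. \<omega> \<in> C \<Longrightarrow> \<nu> \<omega> = \<mu> \<omega>) \<Longrightarrow> (\<And>\<omega>. \<omega> \<in> C \<Longrightarrow> \<nu>' \<omega> = \<mu>' \<omega>) \<Longrightarrow>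
   reg_eq C K \<nu> \<nu>' = reg_eq C K \<mu> \<mu>'"
  unfolding reg_eq_def by auto

lemma cmp_real_sim_K:
  assumes "sim_K K u u'" "v \<le> K"
  shows "cmp_real c u (real v) \<longleftrightarrow> cmp_real c u' (real v)"
proof -
  have "u < real v \<longleftrightarrow> u' < real v"
    using assms floor_less_iff[of u "int v"] floor_less_iff[of u' "int v"] unfolding sim_K_def by auto
  moreover have "u \<le> real v \<longleftrightarrow> u' \<le> real v"
    using assms ceiling_le_iff[of u "int v"] ceiling_le_iff[of u' "int v"] unfolding sim_K_def by auto
  ultimately show ?thesis
    by (cases c) auto
qed

lemma reg_eq_reset:
  assumes "reg_eq C K \<nu>1 \<nu>2"
  shows "reg_eq C K (\<lambda>\<omega>. if r \<omega> then 0 else \<nu>1 \<omega>) (\<lambda>\<omega>. if r \<omega> then 0 else \<nu>2 \<omega>)"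
proof -
  have sim: "\<forall>\<omega>\<in>C. sim_K K (\<nu>1 \<omega>) (\<nu>2 \<omega>)"
    and ord: "\<forall>\<omega>\<in>C. \<forall>\<omega>'\<in>C. fract_K K (\<nu>1 \<omega>) \<le> fract_K K (\<nu>1 \<omega>') \<longleftrightarrow>
                 fract_K K (\<nu>2 \<omega>) \<le> fract_K K (\<nu>2 \<omega>')"
    using assms unfolding reg_eq_def by blast+
  have "fract_K K (\<nu>1 \<omega>) \<le> 0 \<longleftrightarrow> fract_K K (\<nu>2 \<omega>) \<le> 0" if "\<omega> \<in> C" for \<omega>
    using sim that by (simp add: sim_K_fract_K_le_0)
  moreover have "fract_K K 0 = 0"
    by (simp add: fract_K_def)
  ultimately show ?thesis
    using sim ord fract_K_bounds(1) unfolding reg_eq_def by (auto simp: sim_K_refl)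
qed

lemma exists_between_pairs:
  fixes P :: "(real \<times> real) set"
  assumes fin: "finite P"
    and ord: "\<And>a a' b b'. (a, a') \<in> P \<Longrightarrow> (b, b') \<in> P \<Longrightarrow> a \<le> b \<longleftrightarrow> a' \<le> b'"
    and below: "(a0, a0') \<in> P" "a0 < g"
    and avoid: "\<And>a a'. (a, a') \<in> P \<Longrightarrow> a \<noteq> g"
    and upper: "\<And>a a'. (a, a') \<in> P \<Longrightarrow> a' < u"
  shows "\<exists>g'. a0' < g' \<and> g' < u \<and> (\<forall>a a'. (a, a') \<in> P \<longrightarrow> (a < g \<longleftrightarrow> a' < g') \<and> a' \<noteq> g')"
proof -
  define Ls where "Ls = {a'. \<exists>a. (a, a') \<in> P \<and> a < g}"
  define Us where "Us = insert u {a'. \<exists>a. (a, a') \<in> P \<and> g < a}"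
  have "Ls \<subseteq> snd ` P" "Us \<subseteq> insert u (snd ` P)"
    unfolding Ls_def Us_def by force+
  then have fin_LU: "finite Ls" "finite Us"
    by (meson fin finite_imageI finite_insert finite_subset)+
  have "a0' \<in> Ls"
    unfolding Ls_def using below by blast
  then obtain a1 where a1: "(a1, Max Ls) \<in> P" "a1 < g"
    using Max_in[OF fin_LU(1)] unfolding Ls_def by blast
  have L_ge: "a' \<le> Max Ls" if "(a, a') \<in> P" "a < g" for a a'
    using Max_ge[OF fin_LU(1)] that unfolding Ls_def by blast
  have U_le: "Min Us \<le> a'" if "(a, a') \<in> P" "g < a" for a a'
    using Min_le[OF fin_LU(2)] that unfolding Us_def by blast
  have "Min Us \<in> Us"
    using Min_in[OF fin_LU(2)] Us_def by blast
  then have "Min Us = u \<or> (\<exists>b. (b, Min Us) \<in> P \<and> g < b)"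
    using Us_def by blast
  then have LU: "Max Ls < Min Us"
  proof
    assume "Min Us = u"
    then show "Max Ls < Min Us"
      using upper[OF a1(1)] by simp
  next
    assume "\<exists>b. (b, Min Us) \<in> P \<and> g < b"
    then obtain b where "(b, Min Us) \<in> P" "g < b"
      by blast
    then show "Max Ls < Min Us"
      using ord[of b "Min Us" a1 "Max Ls"] a1 by auto
  qed
  have "Min Us \<le> u"
    using Min_le[OF fin_LU(2)] Us_def by blast
  moreover have "a0' \<le> Max Ls"
    using L_ge below by blast
  moreover have "(a < g \<longleftrightarrow> a' < (Max Ls + Min Us) / 2) \<and> a' \<noteq> (Max Ls + Min Us) / 2"
    if "(a, a') \<in> P" for a a'
    using avoid[OF that] L_ge[OF that] U_le[OF that] LU by (cases "a < g") auto
  ultimately show ?thesis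
    using LU by (intro exI[of _ "(Max Ls + Min Us) / 2"]) auto
qed

lemma exists_order_matching_point:
  fixes P :: "(real \<times> real) set"
  assumes fin: "finite P" and zero: "(0, 0) \<in> P"
    and range: "\<And>a a'. (a, a') \<in> P \<Longrightarrow> 0 \<le> a \<and> a < 1 \<and> 0 \<le> a' \<and> a' < 1"
    and ord: "\<And>a a' b b'. (a, a') \<in> P \<Longrightarrow> (b, b') \<in> P \<Longrightarrow> a \<le> b \<longleftrightarrow> a' \<le> b'"
    and g: "0 < g" "g \<le> 1"
  shows "\<exists>g'. 0 < g' \<and> g' \<le> 1 \<and> (g = 1 \<longleftrightarrow> g' = 1) \<and>
           (\<forall>a a'. (a, a') \<in> P \<longrightarrow> (a < g \<longleftrightarrow> a' < g') \<and> (a = g \<longleftrightarrow> a' = g'))"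
proof -
  consider "g = 1" | a' where "(g, a') \<in> P" | "g < 1" "\<forall>a a'. (a, a') \<in> P \<longrightarrow> a \<noteq> g"
    using g by force
  then show ?thesis
  proof cases
    case 1
    then show ?thesis
      using range by (intro exI[of _ 1]) force
  next
    case (2 a')
    have "0 < a'" "a' < 1" "g \<noteq> 1"
      using ord[OF 2 zero] g range[OF 2] by auto
    moreover have "(b < g \<longleftrightarrow> b' < a') \<and> (b = g \<longleftrightarrow> b' = a')" if "(b, b') \<in> P" for b b'
      using ord[OF 2 that] ord[OF that 2] by auto
    ultimately show ?thesis
      by (intro exI[of _ a']) auto
  next
    case 3
    then obtain g' where "0 < g'" "g' < 1" "\<forall>a a'. (a, a') \<in> P \<longrightarrow> (a < g \<longleftrightarrow> a' < g') \<and> a' \<noteq> g'"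
      using exists_between_pairs[OF fin ord zero g(1), of 1] range by blast
    with 3 show ?thesis
      by (intro exI[of _ g']) auto
  qed
qed

definition same_carry :: "real \<Rightarrow> real \<Rightarrow> real \<Rightarrow> real \<Rightarrow> bool" where
  "same_carry x t x' t' \<longleftrightarrow>
     (frac x + frac t < 1 \<longleftrightarrow> frac x' + frac t' < 1) \<and> (frac x + frac t = 1 \<longleftrightarrow> frac x' + frac t' = 1)"

lemma floor_frac_add_cong:
  assumes "\<lfloor>x\<rfloor> = \<lfloor>x'\<rfloor>" "frac x = 0 \<longleftrightarrow> frac x' = 0"
    and "\<lfloor>t\<rfloor> = \<lfloor>t'\<rfloor>" "frac t = 0 \<longleftrightarrow> frac t' = 0"
    and "same_carry x t x' t'"
  shows "\<lfloor>x + t\<rfloor> = \<lfloor>x' + t'\<rfloor>" "frac (x + t) = 0 \<longleftrightarrow> frac (x' + t') = 0"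
proof -
  show "\<lfloor>x + t\<rfloor> = \<lfloor>x' + t'\<rfloor>"
    using assms by (simp add: floor_add same_carry_def)
  have "0 \<le> frac x" "0 \<le> frac t" "0 \<le> frac x'" "0 \<le> frac t'"
    by simp_all
  then show "frac (x + t) = 0 \<longleftrightarrow> frac (x' + t') = 0"
    using assms unfolding frac_add same_carry_def by (auto simp del: frac_eq_0_iff frac_ge_0)
qed

lemma sim_K_add:
  assumes sim: "sim_K K x x'" and "0 \<le> t" "0 \<le> t'"
    and t: "\<lfloor>t\<rfloor> = \<lfloor>t'\<rfloor>" "frac t = 0 \<longleftrightarrow> frac t' = 0"
    and carry: "x \<le> real K \<Longrightarrow> same_carry x t x' t'"
  shows "sim_K K (x + t) (x' + t')"
proof (cases "real K < x")
  case True
  then show ?thesis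
    using assms unfolding sim_K_def by auto
next
  case False
  then have x: "x \<le> real K" "\<lfloor>x\<rfloor> = \<lfloor>x'\<rfloor>" "frac x = 0 \<longleftrightarrow> frac x' = 0"
    using sim unfolding sim_K_iff_frac by auto
  note sum = floor_frac_add_cong[OF x(2,3) t carry[OF x(1)]]
  have "x + t \<le> real K \<longleftrightarrow> x' + t' \<le> real K"
    using le_of_int_iff_floor_frac[of _ "int K"] sum by simp
  then show ?thesis
    unfolding sim_K_iff_frac using sum by auto
qed

lemma frac_add_le_cong:
  assumes "frac x1 \<le> frac x2 \<longleftrightarrow> frac x1' \<le> frac x2'"
    and "same_carry x1 t x1' t'" "same_carry x2 t x2' t'"
  shows "frac (x1 + t) \<le> frac (x2 + t) \<longleftrightarrow> frac (x1' + t') \<le> frac (x2' + t')"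
proof -
  have "0 \<le> frac x1" "0 \<le> frac x2" "0 \<le> frac t" "0 \<le> frac x1'" "0 \<le> frac x2'" "0 \<le> frac t'"
    "frac x1 < 1" "frac x2 < 1" "frac t < 1" "frac x1' < 1" "frac x2' < 1" "frac t' < 1"
    by (simp_all add: frac_lt_1)
  then show ?thesis
    using assms unfolding frac_add same_carry_def by (auto simp del: frac_eq_0_iff frac_ge_0)
qed

lemma reg_eq_vplus:
  assumes reg: "reg_eq C K \<nu> \<nu>'"
    and t: "0 \<le> t" "0 \<le> t'" "\<lfloor>t\<rfloor> = \<lfloor>t'\<rfloor>" "frac t = 0 \<longleftrightarrow> frac t' = 0"
    and carry: "\<And>\<omega>. \<omega> \<in> C \<Longrightarrow> \<nu> \<omega> \<le> real K \<Longrightarrow> same_carry (\<nu> \<omega>) t (\<nu>' \<omega>) t'"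
  shows "reg_eq C K (vplus \<nu> t) (vplus \<nu>' t')"
proof -
  have sim: "sim_K K (\<nu> \<omega>) (\<nu>' \<omega>)" if "\<omega> \<in> C" for \<omega>
    using reg that unfolding reg_eq_def by blast
  have ord: "fract_K K (\<nu> \<omega>1) \<le> fract_K K (\<nu> \<omega>2) \<longleftrightarrow> fract_K K (\<nu>' \<omega>1) \<le> fract_K K (\<nu>' \<omega>2)"
    if "\<omega>1 \<in> C" "\<omega>2 \<in> C" for \<omega>1 \<omega>2
    using reg that unfolding reg_eq_def by blast
  have sim_t: "sim_K K (\<nu> \<omega> + t) (\<nu>' \<omega> + t')" if "\<omega> \<in> C" for \<omega>
    using sim_K_add[OF sim[OF that] t] carry[OF that] by blast
  have "fract_K K (\<nu> \<omega>1 + t) \<le> fract_K K (\<nu> \<omega>2 + t) \<longleftrightarrow>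
        fract_K K (\<nu>' \<omega>1 + t') \<le> fract_K K (\<nu>' \<omega>2 + t')"
    if \<omega>: "\<omega>1 \<in> C" "\<omega>2 \<in> C" for \<omega>1 \<omega>2
  proof (cases "\<nu> \<omega>1 + t \<le> real K \<and> \<nu> \<omega>2 + t \<le> real K")
    case True
    then have le': "\<nu>' \<omega>1 + t' \<le> real K" "\<nu>' \<omega>2 + t' \<le> real K"
      using sim_t[OF \<omega>(1)] sim_t[OF \<omega>(2)] unfolding sim_K_def by auto
    then have "frac (\<nu> \<omega>1) \<le> frac (\<nu> \<omega>2) \<longleftrightarrow> frac (\<nu>' \<omega>1) \<le> frac (\<nu>' \<omega>2)"
      using ord[OF \<omega>] True t by (simp add: fract_K_eq_frac)
    with carry[OF \<omega>(1)] carry[OF \<omega>(2)] True t(1)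
    have "frac (\<nu> \<omega>1 + t) \<le> frac (\<nu> \<omega>2 + t) \<longleftrightarrow> frac (\<nu>' \<omega>1 + t') \<le> frac (\<nu>' \<omega>2 + t')"
      by (intro frac_add_le_cong) auto
    then show ?thesis
      using True le' by (simp add: fract_K_eq_frac)
  next
    case False
    have "fract_K K (\<nu> \<omega> + t) \<le> 0 \<longleftrightarrow> fract_K K (\<nu>' \<omega> + t') \<le> 0" if "\<omega> \<in> C" for \<omega>
      using sim_K_fract_K_le_0[OF sim_t[OF that]] .
    moreover have "fract_K K (\<nu> \<omega> + t) = 0" "fract_K K (\<nu>' \<omega> + t') = 0"
      if "\<omega> \<in> C" "real K < \<nu> \<omega> + t" for \<omega>
      using that sim_t[OF that(1)] unfolding sim_K_def fract_K_def by auto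
    ultimately show ?thesis
      using False \<omega> fract_K_bounds(1) by (metis not_le)
  qed
  then show ?thesis
    using sim_t unfolding reg_eq_def vplus_def by blast
qed

lemma reg_eq_delay:
  assumes fin: "finite C" and reg: "reg_eq C K \<nu> \<nu>'" and t: "0 \<le> t"
  shows "\<exists>t'\<ge>0. reg_eq C K (vplus \<nu> t) (vplus \<nu>' t')"
proof -
  (* The delay t' is chosen so that 1 - frac t', the fractional position at which adding t'
     carries into the integer part, lies among the fractional parts of the clocks under \<nu>'
     exactly where 1 - frac t lies among those under \<nu>. *)
  define P where "P = insert (0, 0) ((\<lambda>\<omega>. (fract_K K (\<nu> \<omega>), fract_K K (\<nu>' \<omega>))) ` C)"
  have sim: "sim_K K (\<nu> \<omega>) (\<nu>' \<omega>)" if "\<omega> \<in> C" for \<omega>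
    using reg that unfolding reg_eq_def by blast
  have P: "finite P" "(0, 0) \<in> P"
    unfolding P_def using fin by simp_all
  have range: "0 \<le> a \<and> a < 1 \<and> 0 \<le> a' \<and> a' < 1" if "(a, a') \<in> P" for a a'
    using that fract_K_bounds unfolding P_def by auto
  have zero_iff: "fract_K K (\<nu> \<omega>) \<le> 0 \<longleftrightarrow> fract_K K (\<nu>' \<omega>) \<le> 0" if "\<omega> \<in> C" for \<omega>
    using sim_K_fract_K_le_0[OF sim[OF that]] .
  have ord_C: "fract_K K (\<nu> \<omega>1) \<le> fract_K K (\<nu> \<omega>2) \<longleftrightarrow> fract_K K (\<nu>' \<omega>1) \<le> fract_K K (\<nu>' \<omega>2)"
    if "\<omega>1 \<in> C" "\<omega>2 \<in> C" for \<omega>1 \<omega>2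
    using reg that unfolding reg_eq_def by blast
  have ord: "a \<le> b \<longleftrightarrow> a' \<le> b'" if "(a, a') \<in> P" "(b, b') \<in> P" for a a' b b'
    using that unfolding P_def by (auto simp: zero_iff ord_C fract_K_bounds(1))
  have g: "0 < 1 - frac t" "1 - frac t \<le> 1"
    using frac_lt_1[of t] by auto
  obtain g' where g': "0 < g'" "g' \<le> 1" "1 - frac t = 1 \<longleftrightarrow> g' = 1"
    "\<And>a a'. (a, a') \<in> P \<Longrightarrow> (a < 1 - frac t \<longleftrightarrow> a' < g') \<and> (a = 1 - frac t \<longleftrightarrow> a' = g')"
    using exists_order_matching_point[OF P range ord g] by blast
  define t' where "t' = real_of_int \<lfloor>t\<rfloor> + (1 - g')"
  have t': "0 \<le> t'" "\<lfloor>t'\<rfloor> = \<lfloor>t\<rfloor>" "frac t' = 1 - g'"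
    using t g' unfolding t'_def by (simp_all add: floor_eq_iff frac_eq)
  have "same_carry (\<nu> \<omega>) t (\<nu>' \<omega>) t'" if "\<omega> \<in> C" "\<nu> \<omega> \<le> real K" for \<omega>
  proof -
    have "\<nu>' \<omega> \<le> real K"
      using sim[OF that(1)] that(2) unfolding sim_K_def by auto
    then have "(frac (\<nu> \<omega>), frac (\<nu>' \<omega>)) \<in> P"
      using that unfolding P_def by (auto simp: fract_K_eq_frac)
    from g'(4)[OF this] show ?thesis
      unfolding same_carry_def t'(3) by auto
  qed
  moreover have "frac t = 0 \<longleftrightarrow> frac t' = 0"
    using t'(3) g'(3) by (auto simp del: frac_eq_0_iff)
  ultimately show ?thesis
    using reg_eq_vplus[OF reg t t'(1) t'(2)[symmetric]] t'(1) by blast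
qed

section \<open>Region-equivalent situations\<close>

lemma teval_in_objs: "wf_t D t \<Longrightarrow> \<forall>x\<in>fv_t t. env x \<in> objs D \<Longrightarrow> teval env t \<in> objs D"
  by (cases t) auto

lemma map_teval_in_args:
  "\<forall>t\<in>set ts. wf_t D t \<Longrightarrow> \<forall>x\<in>(\<Union>t\<in>set ts. fv_t t). env x \<in> objs D \<Longrightarrow>
   map (teval env) ts \<in> args D (length ts)"
  unfolding args_def using teval_in_objs by fastforce

lemma holds_region_cong:
  assumes rel: "\<forall>F\<in>rfl D. \<forall>xs\<in>args D (rar D F). fst st1 F xs = fst st2 F xs"
    and clk: "\<forall>\<omega>\<in>clocks D. sim_K K (snd st1 \<omega>) (snd st2 \<omega>)"
  shows "wf_fm D \<phi> \<Longrightarrow> \<forall>n\<in>nums_fm \<phi>. n \<le> K \<Longrightarrow> \<forall>x\<in>fv_fm \<phi>. env x \<in> objs D \<Longrightarrow>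
    holds (objs D) st1 env \<phi> = holds (objs D) st2 env \<phi>"
proof (induction \<phi> arbitrary: env)
  case (Rel F ts)
  then have "map (teval env) ts \<in> args D (rar D F)"
    using map_teval_in_args[of ts D env] by auto
  then show ?case
    using rel Rel by auto
next
  case (Clk g ts c v)
  then have "(g, map (teval env) ts) \<in> clocks D"
    using map_teval_in_args[of ts D env] unfolding clocks_def by auto
  then show ?case
    using clk Clk cmp_real_sim_K by auto
next
  case (Ex x \<phi>)
  then show ?case
    by simp
qed auto

definition bounded_fm :: "('f, 'g, 'a, 'o, 'v) bat \<Rightarrow> nat \<Rightarrow> ('f, 'g, 'o, 'v) fm \<Rightarrow> bool" where
  "bounded_fm D K \<phi> \<longleftrightarrow> closed_wf D \<phi> \<and> (\<forall>n\<in>nums_fm \<phi>. n \<le> K)"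

lemma models_sit_eq:
  "bounded_fm D K \<phi> \<Longrightarrow> sit_eq D K \<sigma>1 \<sigma>2 \<Longrightarrow> models D \<phi> \<sigma>1 = models D \<phi> \<sigma>2"
  unfolding bounded_fm_def models_def closed_wf_def sit_eq_def reg_eq_def val_def
  by (intro holds_region_cong) auto

lemma sit_eq_refl: "sit_eq D K \<sigma> \<sigma>"
  by (simp add: sit_eq_def reg_eq_refl)

lemma sit_eq_sym: "sit_eq D K \<sigma>1 \<sigma>2 \<Longrightarrow> sit_eq D K \<sigma>2 \<sigma>1"
  by (simp add: sit_eq_def reg_eq_sym)

lemma sit_eq_trans: "sit_eq D K \<sigma>1 \<sigma>2 \<Longrightarrow> sit_eq D K \<sigma>2 \<sigma>3 \<Longrightarrow> sit_eq D K \<sigma>1 \<sigma>3"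
  unfolding sit_eq_def by (auto intro: reg_eq_trans)

lemma cls_eq_iff: "cls D K \<sigma>1 = cls D K \<sigma>2 \<longleftrightarrow> sit_eq D K \<sigma>1 \<sigma>2"
proof
  assume "cls D K \<sigma>1 = cls D K \<sigma>2"
  then show "sit_eq D K \<sigma>1 \<sigma>2"
    unfolding cls_def using sit_eq_refl by blast
next
  assume "sit_eq D K \<sigma>1 \<sigma>2"
  then show "cls D K \<sigma>1 = cls D K \<sigma>2"
    unfolding cls_def using sit_eq_trans sit_eq_sym by blast
qed

lemma sit_eq_nonneg:
  "sit_eq D K \<sigma>1 \<sigma>2 \<Longrightarrow> \<forall>\<omega>\<in>clocks D. 0 \<le> val D \<sigma>1 \<omega> \<Longrightarrow> \<forall>\<omega>\<in>clocks D. 0 \<le> val D \<sigma>2 \<omega>"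
  unfolding sit_eq_def reg_eq_def using sim_K_nonneg by metis

lemma val_Act:
  "val D (Act A os # \<sigma>) =
   (\<lambda>(g, xs). if holds (objs D) (st D \<sigma>) env0 (reset D A os g xs) then 0 else val D \<sigma> (g, xs))"
  unfolding val_def by simp

lemma val_Wait: "val D (Wait t # \<sigma>) = vplus (val D \<sigma>) t"
  by (simp add: val_def vplus_def)

locale bounded_clocked_bat =
  fixes D :: "('f, 'g, 'a, 'o, 'v) bat" and K :: nat
  assumes clocked: "clocked_bat D"
    and bounded: "\<forall>n\<in>bat_nums D. n \<le> K"
begin

lemma finite_clocks: "finite (clocks D)"
proof -
  have "clocks D = Sigma (ffl D) (\<lambda>g. args D (far D g))"
    unfolding clocks_def by auto
  moreover have "finite (args D n)" for n
    using clocked finite_lists_length_eq[of "objs D" n] unfolding clocked_bat_def args_def by auto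
  ultimately show ?thesis
    using clocked unfolding clocked_bat_def by auto
qed

lemma poss_bounded_fm:
  "A \<in> atypes D \<Longrightarrow> os \<in> args D (aar D A) \<Longrightarrow> bounded_fm D K (poss D A os)"
  using clocked bounded by (auto simp: bounded_fm_def clocked_bat_def bat_nums_def)

lemma ssa_Wait_bounded_fm:
  "F \<in> rfl D \<Longrightarrow> xs \<in> args D (rar D F) \<Longrightarrow> bounded_fm D K (ssa D None F xs)"
  using clocked bounded by (auto simp: bounded_fm_def clocked_bat_def bat_nums_def)

lemma ssa_Act_bounded_fm:
  "F \<in> rfl D \<Longrightarrow> xs \<in> args D (rar D F) \<Longrightarrow> A \<in> atypes D \<Longrightarrow> os \<in> args D (aar D A) \<Longrightarrow>
   bounded_fm D K (ssa D (Some (A, os)) F xs)"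
  using clocked bounded by (auto simp: bounded_fm_def clocked_bat_def bat_nums_def)

lemma reset_bounded_fm:
  "(g, xs) \<in> clocks D \<Longrightarrow> A \<in> atypes D \<Longrightarrow> os \<in> args D (aar D A) \<Longrightarrow>
   bounded_fm D K (reset D A os g xs)"
  using clocked bounded by (auto simp: bounded_fm_def clocked_bat_def bat_nums_def clocks_def)

lemma sit_eq_Act:
  assumes eq: "sit_eq D K \<sigma>1 \<sigma>2" and A: "A \<in> atypes D" "os \<in> args D (aar D A)"
  shows "sit_eq D K (Act A os # \<sigma>1) (Act A os # \<sigma>2)"
proof -
  have rel: "fst (st D (Act A os # \<sigma>1)) F xs = fst (st D (Act A os # \<sigma>2)) F xs"
    if "F \<in> rfl D" "xs \<in> args D (rar D F)" for F xs
    using models_sit_eq[OF ssa_Act_bounded_fm[OF that A] eq] by (simp add: models_def)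
  define r where "r = (\<lambda>(g, xs). models D (reset D A os g xs) \<sigma>1)"
  have val1: "val D (Act A os # \<sigma>1) \<omega> = (if r \<omega> then 0 else val D \<sigma>1 \<omega>)" for \<omega>
    by (cases \<omega>) (simp add: val_Act r_def models_def)
  have val2: "val D (Act A os # \<sigma>2) \<omega> = (if r \<omega> then 0 else val D \<sigma>2 \<omega>)"
    if "\<omega> \<in> clocks D" for \<omega>
  proof (cases \<omega>)
    case (Pair g xs)
    then have "r \<omega> = models D (reset D A os g xs) \<sigma>2"
      using models_sit_eq[OF reset_bounded_fm[OF _ A] eq] that by (simp add: r_def)
    then show ?thesis
      using Pair by (simp add: val_Act models_def)
  qed
  have "reg_eq (clocks D) K (\<lambda>\<omega>. if r \<omega> then 0 else val D \<sigma>1 \<omega>)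
                            (\<lambda>\<omega>. if r \<omega> then 0 else val D \<sigma>2 \<omega>)"
    using eq unfolding sit_eq_def by (intro reg_eq_reset) auto
  then have "reg_eq (clocks D) K (val D (Act A os # \<sigma>1)) (val D (Act A os # \<sigma>2))"
    by (rule reg_eq_cong[THEN iffD2, rotated -1]) (simp_all add: val1 val2)
  with rel show ?thesis
    unfolding sit_eq_def by blast
qed

lemma sit_eq_Wait:
  assumes eq: "sit_eq D K \<sigma>1 \<sigma>2"
    and reg: "reg_eq (clocks D) K (vplus (val D \<sigma>1) t) (vplus (val D \<sigma>2) t')"
  shows "sit_eq D K (Wait t # \<sigma>1) (Wait t' # \<sigma>2)"
proof -
  have "fst (st D (Wait t # \<sigma>1)) F xs = fst (st D (Wait t' # \<sigma>2)) F xs"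
    if "F \<in> rfl D" "xs \<in> args D (rar D F)" for F xs
    using models_sit_eq[OF ssa_Wait_bounded_fm[OF that] eq] by (simp add: models_def)
  with reg show ?thesis
    unfolding sit_eq_def val_Wait by blast
qed

end

section \<open>Programs\<close>

definition bounded_program :: "('f, 'g, 'a, 'o, 'v) bat \<Rightarrow> nat \<Rightarrow> ('f, 'g, 'a, 'o, 'v) prog \<Rightarrow> bool" where
  "bounded_program D K p \<longleftrightarrow> wf_p D p \<and> fv_p p = {} \<and> (\<forall>n\<in>nums_p p. n \<le> K)"

lemma fv_subst_t [simp]: "fv_t (subst_t x v t) = fv_t t - {x}"
  by (cases t) auto

lemma wf_subst_t: "wf_t D t \<Longrightarrow> v \<in> objs D \<Longrightarrow> wf_t D (subst_t x v t)"
  by (cases t) auto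

lemma fv_subst_fm [simp]: "fv_fm (subst_fm x v \<phi>) = fv_fm \<phi> - {x}"
  by (induction \<phi>) auto

lemma nums_subst_fm [simp]: "nums_fm (subst_fm x v \<phi>) = nums_fm \<phi>"
  by (induction \<phi>) auto

lemma wf_subst_fm: "wf_fm D \<phi> \<Longrightarrow> v \<in> objs D \<Longrightarrow> wf_fm D (subst_fm x v \<phi>)"
  by (induction \<phi>) (auto simp: wf_subst_t)

lemma fv_subst_p [simp]: "fv_p (subst_p x v p) = fv_p p - {x}"
  by (induction p) auto

lemma nums_subst_p [simp]: "nums_p (subst_p x v p) = nums_p p"
  by (induction p) auto

lemma wf_subst_p: "wf_p D p \<Longrightarrow> v \<in> objs D \<Longrightarrow> wf_p D (subst_p x v p)"
  by (induction p) (auto simp: wf_subst_t wf_subst_fm)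

lemma bounded_program_subst:
  "bounded_program D K (Pi x p) \<Longrightarrow> v \<in> objs D \<Longrightarrow> bounded_program D K (subst_p x v p)"
  unfolding bounded_program_def by (auto simp: wf_subst_p)

lemma trans_sit_Cons: "trans D p s a p' s' \<Longrightarrow> s' = a # s"
  by (induction D p s a p' s' rule: trans.induct) auto

lemma trans_Wait_nonneg: "trans D p s a p' s' \<Longrightarrow> a = Wait t \<Longrightarrow> 0 \<le> t"
  by (induction D p s a p' s' rule: trans.induct) auto

lemma trans_Act_args:
  "trans D p s a p' s' \<Longrightarrow> a = Act A os \<Longrightarrow> wf_p D p \<Longrightarrow> A \<in> atypes D \<and> os \<in> args D (aar D A)"
  by (induction D p s a p' s' rule: trans.induct) (auto simp: args_def wf_subst_p)

lemma trans_Wait_retime: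
  "trans D p s a p' s' \<Longrightarrow> a = Wait t \<Longrightarrow> 0 \<le> t' \<Longrightarrow> trans D p s (Wait t') p' (Wait t' # s)"
  by (induction D p s a p' s' rule: trans.induct) auto

lemma trans_bounded_program: "trans D p s a p' s' \<Longrightarrow> bounded_program D K p \<Longrightarrow> bounded_program D K p'"
proof (induction D p s a p' s' rule: trans.induct)
  case (6 D x p s a p' s')
  then show ?case
    using bounded_program_subst by fastforce
qed (auto simp: bounded_program_def Nil_prog_def)

lemma trans_star_bounded_program:
  "trans_star D p s as p' s' \<Longrightarrow> bounded_program D K p \<Longrightarrow> bounded_program D K p'"
  by (induction rule: trans_star.induct) (auto dest: trans_bounded_program)

lemma trans_star_snoc:
  "trans_star D p s as q s1 \<Longrightarrow> trans D q s1 a r s2 \<Longrightarrow> trans_star D p s (as @ [a]) r s2"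
  by (induction rule: trans_star.induct) (auto intro: trans_star.intros)

lemma trans_val_nonneg:
  assumes "trans D p s a p' s'" "\<forall>\<omega>. 0 \<le> val D s \<omega>"
  shows "\<forall>\<omega>. 0 \<le> val D s' \<omega>"
proof (cases a)
  case (Act A os)
  then show ?thesis
    using assms trans_sit_Cons[OF assms(1)] by (auto simp: val_Act)
next
  case (Wait t)
  then show ?thesis
    using assms trans_sit_Cons[OF assms(1)] trans_Wait_nonneg[OF assms(1)] by (simp add: val_Wait vplus_def)
qed

lemma final_sit_eq:
  "bounded_program D K p \<Longrightarrow> sit_eq D K \<sigma>1 \<sigma>2 \<Longrightarrow> final D p \<sigma>1 = final D p \<sigma>2"
proof (induction D p \<sigma>1 rule: final.induct)
  case (3 D \<phi> s)
  then show ?case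
    using models_sit_eq[of D K \<phi> s \<sigma>2] by (simp add: bounded_program_def bounded_fm_def closed_wf_def)
next
  case (6 D x p s)
  then show ?case
    using bounded_program_subst by fastforce
qed (auto simp: bounded_program_def)

lemma trans_sit_eq:
  "trans D p \<sigma>1 a p' s' \<Longrightarrow> bounded_program D K p \<Longrightarrow> sit_eq D K \<sigma>1 \<sigma>2 \<Longrightarrow>
   (\<And>A os. A \<in> atypes D \<Longrightarrow> os \<in> args D (aar D A) \<Longrightarrow> bounded_fm D K (poss D A os)) \<Longrightarrow>
   trans D p \<sigma>2 a p' (a # \<sigma>2)"
proof (induction D p \<sigma>1 a p' s' rule: trans.induct)
  case (1 D A ts s a p' s')
  then obtain os where os: "ts = map Obj os" "a = Act A os" "models D (poss D A os) s"
    by auto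
  then have "A \<in> atypes D" "os \<in> args D (aar D A)"
    using 1 by (auto simp: bounded_program_def args_def)
  then have "models D (poss D A os) \<sigma>2"
    using os(3) models_sit_eq[OF 1(4) 1(3)] by blast
  then show ?case
    using 1 os by auto
next
  case (4 D p q s a p' s')
  then show ?case
    using final_sit_eq[of D K p s \<sigma>2] by (auto simp: bounded_program_def)
next
  case (6 D x p s a p' s')
  then show ?case
    using bounded_program_subst by fastforce
qed (auto simp: bounded_program_def)

lemma tsuccs_delays:
  assumes TS: "tsuccs_spec D TS" and fin: "finite (clocks D)"
    and eq: "sit_eq D K \<sigma>' \<sigma>" and nonneg: "\<forall>\<omega>\<in>clocks D. 0 \<le> val D \<sigma> \<omega>"
  shows "\<forall>t\<ge>0. \<exists>t'\<in>TS (val D \<sigma>) K. 0 \<le> t' \<and>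
           reg_eq (clocks D) K (vplus (val D \<sigma>') t) (vplus (val D \<sigma>) t')"
proof (intro allI impI)
  fix t :: real
  assume "0 \<le> t"
  then obtain t1 where t1: "0 \<le> t1" "reg_eq (clocks D) K (vplus (val D \<sigma>') t) (vplus (val D \<sigma>) t1)"
    using reg_eq_delay[OF fin] eq unfolding sit_eq_def by blast
  then obtain t2 where "t2 \<in> TS (val D \<sigma>) K" "0 \<le> t2"
      "reg_eq (clocks D) K (vplus (val D \<sigma>) t1) (vplus (val D \<sigma>) t2)"
    using TS nonneg unfolding tsuccs_spec_def by blast
  with t1(2) show "\<exists>t'\<in>TS (val D \<sigma>) K. 0 \<le> t' \<and> reg_eq (clocks D) K (vplus (val D \<sigma>') t) (vplus (val D \<sigma>) t')"
    using reg_eq_trans by blast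
qed

context bounded_clocked_bat
begin

lemma trans_simulation:
  assumes p: "bounded_program D K p" and eq: "sit_eq D K \<sigma>1 \<sigma>2" and tr: "trans D p \<sigma>1 a p' \<sigma>1'"
    and delays: "\<forall>t\<ge>0. \<exists>t'\<in>W. 0 \<le> t' \<and> reg_eq (clocks D) K (vplus (val D \<sigma>1) t) (vplus (val D \<sigma>2) t')"
  shows "\<exists>b. trans D p \<sigma>2 b p' (b # \<sigma>2) \<and> sit_eq D K \<sigma>1' (b # \<sigma>2) \<and>
             ((\<exists>A os. b = Act A os) \<or> (\<exists>t'\<in>W. b = Wait t'))"
proof -
  have tr2: "trans D p \<sigma>2 a p' (a # \<sigma>2)"
    using trans_sit_eq[OF tr p eq poss_bounded_fm] .
  show ?thesis
  proof (cases a)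
    case (Act A os)
    then have "A \<in> atypes D" "os \<in> args D (aar D A)"
      using trans_Act_args[OF tr] p by (auto simp: bounded_program_def)
    then have "sit_eq D K \<sigma>1' (a # \<sigma>2)"
      using trans_sit_Cons[OF tr] sit_eq_Act[OF eq] Act by simp
    with tr2 Act show ?thesis
      by blast
  next
    case (Wait t)
    then obtain t' where t': "t' \<in> W" "0 \<le> t'"
        "reg_eq (clocks D) K (vplus (val D \<sigma>1) t) (vplus (val D \<sigma>2) t')"
      using delays trans_Wait_nonneg[OF tr] by blast
    then have "trans D p \<sigma>2 (Wait t') p' (Wait t' # \<sigma>2)"
      using trans_Wait_retime[OF tr2 Wait] by blast
    moreover have "sit_eq D K \<sigma>1' (Wait t' # \<sigma>2)"
      using trans_sit_Cons[OF tr] sit_eq_Wait[OF eq t'(3)] Wait by simp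
    ultimately show ?thesis
      using t'(1) by blast
  qed
qed

end

section \<open>The graph built by Algorithm 2\<close>

definition abstract_nodes :: "('f, 'g, 'a, 'o, 'v) bat \<Rightarrow> nat \<Rightarrow>
    (('f, 'g, 'a, 'o, 'v) prog \<times> ('a, 'o) sit) set \<Rightarrow> ('f, 'g, 'a, 'o, 'v) tstate set" where
  "abstract_nodes D K S = (\<lambda>(p, \<sigma>). (cls D K \<sigma>, p)) ` S"

definition edges_abstract_succs :: "('f, 'g, 'a, 'o, 'v) bat \<Rightarrow> nat \<Rightarrow>
    (('g \<times> 'o list \<Rightarrow> real) \<Rightarrow> nat \<Rightarrow> real set) \<Rightarrow>
    (('f, 'g, 'a, 'o, 'v) tstate \<times> ('f, 'g, 'a, 'o, 'v) tstate) set \<Rightarrow> bool" where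
  "edges_abstract_succs D K TS E \<longleftrightarrow>
     (\<forall>(x, y)\<in>E. \<exists>\<sigma> p. x = (cls D K \<sigma>, p) \<and> y \<in> abstract_nodes D K (succs D K TS \<sigma> p))"

fun alg_sound_inv :: "('f, 'g, 'a, 'o, 'v) bat \<Rightarrow> nat \<Rightarrow> (('g \<times> 'o list \<Rightarrow> real) \<Rightarrow> nat \<Rightarrow> real set) \<Rightarrow>
    ('f, 'g, 'a, 'o, 'v) tstate \<Rightarrow> ('f, 'g, 'a, 'o, 'v) aconf \<Rightarrow> bool" where
  "alg_sound_inv D K TS q0 (Opn, V, E, cur) \<longleftrightarrow>
     (\<forall>(\<sigma>, p)\<in>Opn. (cls D K \<sigma>, p) \<in> insert q0 V) \<and>
     (\<forall>\<sigma> p R. cur = Some (\<sigma>, p, R) \<longrightarrow> (cls D K \<sigma>, p) \<in> insert q0 V \<and> R \<subseteq> succs D K TS \<sigma> p) \<and>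
     (\<forall>x\<in>insert q0 V. (q0, x) \<in> E\<^sup>*) \<and>
     edges_abstract_succs D K TS E"

definition represented :: "('f, 'g, 'a, 'o, 'v) bat \<Rightarrow> nat \<Rightarrow> (('g \<times> 'o list \<Rightarrow> real) \<Rightarrow> nat \<Rightarrow> real set) \<Rightarrow>
    ('f, 'g, 'a, 'o, 'v) tstate set \<Rightarrow> (('a, 'o) sit \<times> ('f, 'g, 'a, 'o, 'v) prog) set \<Rightarrow>
    ('f, 'g, 'a, 'o, 'v) tstate \<Rightarrow> bool" where
  "represented D K TS N P x \<longleftrightarrow>
     (\<exists>\<sigma>. fst x = cls D K \<sigma> \<and> ((\<sigma>, snd x) \<in> P \<or> abstract_nodes D K (succs D K TS \<sigma> (snd x)) \<subseteq> N))"

lemma represented_mono: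
  "represented D K TS N P x \<Longrightarrow> N \<subseteq> N' \<Longrightarrow> P \<subseteq> P' \<Longrightarrow> represented D K TS N' P' x"
  unfolding represented_def by blast

lemma represented_expanded:
  "represented D K TS N (insert (\<sigma>, p) P) x \<Longrightarrow> abstract_nodes D K (succs D K TS \<sigma> p) \<subseteq> N \<Longrightarrow>
   represented D K TS N P x"
  unfolding represented_def by auto

fun current_pair :: "(('a, 'o) sit \<times> ('f, 'g, 'a, 'o, 'v) prog \<times> 'r) option \<Rightarrow>
    (('a, 'o) sit \<times> ('f, 'g, 'a, 'o, 'v) prog) set" where
  "current_pair None = {}"
| "current_pair (Some (\<sigma>, p, R)) = {(\<sigma>, p)}"

fun alg_complete_inv :: "('f, 'g, 'a, 'o, 'v) bat \<Rightarrow> nat \<Rightarrow> (('g \<times> 'o list \<Rightarrow> real) \<Rightarrow> nat \<Rightarrow> real set) \<Rightarrow>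
    ('f, 'g, 'a, 'o, 'v) tstate \<Rightarrow> ('f, 'g, 'a, 'o, 'v) aconf \<Rightarrow> bool" where
  "alg_complete_inv D K TS q0 (Opn, V, E, cur) \<longleftrightarrow>
     (\<forall>\<sigma> p R. cur = Some (\<sigma>, p, R) \<longrightarrow> abstract_nodes D K (succs D K TS \<sigma> p - R) \<subseteq> insert q0 V) \<and>
     (\<forall>x\<in>insert q0 V. represented D K TS (insert q0 V) (Opn \<union> current_pair cur) x)"

lemma alg_step_sound_inv:
  assumes step: "alg_step D K TS c c'" and inv: "alg_sound_inv D K TS q0 c"
  shows "alg_sound_inv D K TS q0 c'"
  using step
proof cases
  case (process p' \<sigma>' R Opn V E \<sigma> p)
  let ?E' = "insert ((cls D K \<sigma>, p), (cls D K \<sigma>', p')) E"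
  have opn: "\<forall>(\<sigma>, p)\<in>Opn. (cls D K \<sigma>, p) \<in> insert q0 V"
    and cur: "(cls D K \<sigma>, p) \<in> insert q0 V" "R \<subseteq> succs D K TS \<sigma> p"
    and reach: "\<forall>x\<in>insert q0 V. (q0, x) \<in> E\<^sup>*"
    and edges: "edges_abstract_succs D K TS E"
    using inv process by auto
  have E_sub: "E\<^sup>* \<subseteq> ?E'\<^sup>*"
    by (simp add: rtrancl_mono subset_insertI)
  have "(q0, (cls D K \<sigma>', p')) \<in> ?E'\<^sup>*"
    using reach cur(1) E_sub by (meson insertI1 rtrancl.rtrancl_into_rtrancl subsetD)
  then have "\<forall>x\<in>insert q0 (insert (cls D K \<sigma>', p') V). (q0, x) \<in> ?E'\<^sup>*"
    using reach E_sub by blast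
  moreover have "(cls D K \<sigma>', p') \<in> abstract_nodes D K (succs D K TS \<sigma> p)"
    using cur(2) process unfolding abstract_nodes_def by (auto intro!: image_eqI[of _ _ "(p', \<sigma>')"])
  ultimately show ?thesis
    using process opn cur edges by (auto simp: edges_abstract_succs_def)
qed (use inv in auto)

lemma alg_step_complete_inv:
  assumes step: "alg_step D K TS c c'" and inv: "alg_complete_inv D K TS q0 c"
  shows "alg_complete_inv D K TS q0 c'"
  using step
proof cases
  case (pick \<sigma> p Opn V E)
  then have "Opn - {(\<sigma>, p)} \<union> {(\<sigma>, p)} = Opn"
    by blast
  then show ?thesis
    using inv pick by (simp add: abstract_nodes_def)
next
  case (process p' \<sigma>' R Opn V E \<sigma> p)
  let ?Opn' = "if (cls D K \<sigma>', p') \<notin> V then Opn \<union> {(\<sigma>', p')} else Opn"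
  let ?N' = "insert q0 (V \<union> {(cls D K \<sigma>', p')})"
  have "abstract_nodes D K (succs D K TS \<sigma> p - R) \<subseteq> insert q0 V"
    using inv process by simp
  then have "abstract_nodes D K (succs D K TS \<sigma> p - (R - {(p', \<sigma>')})) \<subseteq> ?N'"
    unfolding abstract_nodes_def by auto
  moreover have "represented D K TS ?N' (?Opn' \<union> {(\<sigma>, p)}) x" if "x \<in> ?N'" for x
  proof (cases "x \<in> insert q0 V")
    case True
    then have "represented D K TS (insert q0 V) (Opn \<union> {(\<sigma>, p)}) x"
      using inv process by auto
    then show ?thesis
      by (rule represented_mono) auto
  next
    case False
    then show ?thesis
      using that unfolding represented_def by auto
  qed
  ultimately show ?thesis
    using process by simp
next
  case (finish Opn V E \<sigma> p)
  then have expanded: "abstract_nodes D K (succs D K TS \<sigma> p) \<subseteq> insert q0 V"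
    using inv by simp
  have "represented D K TS (insert q0 V) Opn x" if "x \<in> insert q0 V" for x
  proof -
    have "represented D K TS (insert q0 V) (insert (\<sigma>, p) Opn) x"
      using inv finish that by auto
    then show ?thesis
      using expanded by (rule represented_expanded)
  qed
  then show ?thesis
    using finish by simp
qed

definition succs_closed :: "('f, 'g, 'a, 'o, 'v) bat \<Rightarrow> nat \<Rightarrow> (('g \<times> 'o list \<Rightarrow> real) \<Rightarrow> nat \<Rightarrow> real set) \<Rightarrow>
    ('f, 'g, 'a, 'o, 'v) tstate set \<Rightarrow> bool" where
  "succs_closed D K TS N \<longleftrightarrow> (\<forall>x\<in>N. represented D K TS N {} x)"

lemma alg2_returns_graph:
  assumes "alg2_returns D K TS \<delta> V q0 E"
  shows "q0 = (cls D K [], \<delta>)"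
    and "\<forall>x\<in>insert q0 V. (q0, x) \<in> E\<^sup>*"
    and "edges_abstract_succs D K TS E"
    and "succs_closed D K TS (insert q0 V)"
proof -
  show q0: "q0 = (cls D K [], \<delta>)"
    using assms unfolding alg2_returns_def by blast
  have run: "(alg_step D K TS)\<^sup>*\<^sup>* ({([], \<delta>)}, {}, {}, None) ({}, V, E, None)"
    using assms unfolding alg2_returns_def by blast
  have "alg_sound_inv D K TS q0 ({([], \<delta>)}, {}, {}, None)"
    using q0 by (simp add: edges_abstract_succs_def)
  with run have "alg_sound_inv D K TS q0 ({}, V, E, None)"
    by (induction rule: rtranclp_induct) (auto intro: alg_step_sound_inv)
  then show "\<forall>x\<in>insert q0 V. (q0, x) \<in> E\<^sup>*" and "edges_abstract_succs D K TS E"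
    by simp_all
  have "alg_complete_inv D K TS q0 ({([], \<delta>)}, {}, {}, None)"
    using q0 by (auto simp: represented_def)
  with run have "alg_complete_inv D K TS q0 ({}, V, E, None)"
    by (induction rule: rtranclp_induct) (auto intro: alg_step_complete_inv)
  then show "succs_closed D K TS (insert q0 V)"
    unfolding succs_closed_def by simp
qed

context bounded_clocked_bat
begin

lemma abstract_path_realizable:
  assumes edges: "edges_abstract_succs D K TS E"
    and \<delta>: "bounded_program D K \<delta>"
    and path: "((cls D K [], \<delta>), (c, q)) \<in> E\<^sup>*"
  shows "\<exists>\<sigma> as. trans_star D \<delta> [] as q \<sigma> \<and> c = cls D K \<sigma>"
  using path
proof (induction rule: rtrancl_induct2)
  case refl
  then show ?case
    using trans_star.refl by blast
next
  case (step c1 q1 c2 q2)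
  obtain \<sigma>c as where run: "trans_star D \<delta> [] as q1 \<sigma>c" and c1: "c1 = cls D K \<sigma>c"
    using step.IH by blast
  obtain \<sigma> \<sigma>' a where edge: "c1 = cls D K \<sigma>" "c2 = cls D K \<sigma>'" "trans D q1 \<sigma> a q2 \<sigma>'"
    using edges step.hyps(2) unfolding edges_abstract_succs_def abstract_nodes_def succs_def by fastforce
  have eq: "sit_eq D K \<sigma> \<sigma>c"
    using edge(1) c1 cls_eq_iff by metis
  then have "\<forall>t\<ge>0. \<exists>t'\<in>UNIV. 0 \<le> t' \<and> reg_eq (clocks D) K (vplus (val D \<sigma>) t) (vplus (val D \<sigma>c) t')"
    using reg_eq_delay[OF finite_clocks] unfolding sit_eq_def by blast
  then obtain b where "trans D q1 \<sigma>c b q2 (b # \<sigma>c)" "sit_eq D K \<sigma>' (b # \<sigma>c)"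
    using trans_simulation[OF trans_star_bounded_program[OF run \<delta>] eq edge(3)] by blast
  then show ?case
    using trans_star_snoc[OF run] edge(2) cls_eq_iff by blast
qed

lemma succs_closed_simulates_trans:
  assumes TS: "tsuccs_spec D TS" and closed: "succs_closed D K TS N"
    and node: "(cls D K \<sigma>, p) \<in> N" and eq: "sit_eq D K \<sigma> s" and nonneg: "\<forall>\<omega>. 0 \<le> val D s \<omega>"
    and p: "bounded_program D K p" and tr: "trans D p s a q s'"
  shows "\<exists>\<sigma>'. (cls D K \<sigma>', q) \<in> N \<and> sit_eq D K \<sigma>' s'"
proof -
  obtain \<sigma>0 where \<sigma>0: "cls D K \<sigma> = cls D K \<sigma>0" "abstract_nodes D K (succs D K TS \<sigma>0 p) \<subseteq> N"
    using closed node unfolding succs_closed_def represented_def by fastforce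
  have eq0: "sit_eq D K s \<sigma>0"
    using \<sigma>0(1) eq cls_eq_iff sit_eq_sym sit_eq_trans by metis
  then have "\<forall>\<omega>\<in>clocks D. 0 \<le> val D \<sigma>0 \<omega>"
    using sit_eq_nonneg nonneg by blast
  note delays = tsuccs_delays[OF TS finite_clocks eq0 this]
  obtain b where b: "trans D p \<sigma>0 b q (b # \<sigma>0)" "sit_eq D K s' (b # \<sigma>0)"
      "(\<exists>A os. b = Act A os) \<or> (\<exists>t'\<in>TS (val D \<sigma>0) K. b = Wait t')"
    using trans_simulation[OF p eq0 tr delays] by blast
  have "b \<in> acts D K TS \<sigma>0"
    using b(3) trans_Act_args[OF b(1)] p unfolding acts_def bounded_program_def by auto
  then have "(q, b # \<sigma>0) \<in> succs D K TS \<sigma>0 p"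
    using b(1) unfolding succs_def by blast
  then have "(cls D K (b # \<sigma>0), q) \<in> N"
    using \<sigma>0(2) unfolding abstract_nodes_def by blast
  then show ?thesis
    using b(2) sit_eq_sym by blast
qed

lemma trans_star_reaches_succs_closed:
  assumes TS: "tsuccs_spec D TS" and closed: "succs_closed D K TS N"
  shows "trans_star D p s as p' s' \<Longrightarrow> (cls D K \<sigma>, p) \<in> N \<Longrightarrow> sit_eq D K \<sigma> s \<Longrightarrow>
    \<forall>\<omega>. 0 \<le> val D s \<omega> \<Longrightarrow> bounded_program D K p \<Longrightarrow> \<exists>\<sigma>'. (cls D K \<sigma>', p') \<in> N \<and> sit_eq D K \<sigma>' s'"
proof (induction arbitrary: \<sigma> rule: trans_star.induct)
  case (refl p s)
  then show ?case
    by blast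
next
  case (step p s a q s1 as p' s')
  then obtain \<sigma>1 where "(cls D K \<sigma>1, q) \<in> N" "sit_eq D K \<sigma>1 s1"
    using succs_closed_simulates_trans[OF TS closed] by blast
  moreover have "\<forall>\<omega>. 0 \<le> val D s1 \<omega>" "bounded_program D K q"
    using step trans_val_nonneg trans_bounded_program by blast+
  ultimately show ?case
    using step.IH by blast
qed

lemma realization_if_abstract_final:
  assumes edges: "edges_abstract_succs D K TS E"
    and \<delta>: "bounded_program D K \<delta>"
    and path: "((cls D K [], \<delta>), (cls D K \<sigma>', \<delta>')) \<in> E\<^sup>*" and final: "final D \<delta>' \<sigma>'"
  shows "\<exists>\<alpha>s. realization D \<delta> \<alpha>s"
proof -
  obtain \<sigma> as where run: "trans_star D \<delta> [] as \<delta>' \<sigma>" and "cls D K \<sigma>' = cls D K \<sigma>"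
    using abstract_path_realizable[OF edges \<delta> path] by blast
  then have "final D \<delta>' \<sigma>"
    using final final_sit_eq[OF trans_star_bounded_program[OF run \<delta>]] cls_eq_iff by blast
  then show ?thesis
    using run unfolding realization_def by blast
qed

lemma abstract_final_if_realization:
  assumes TS: "tsuccs_spec D TS" and closed: "succs_closed D K TS N"
    and init: "(cls D K [], \<delta>) \<in> N" and \<delta>: "bounded_program D K \<delta>"
    and "realization D \<delta> \<alpha>s"
  shows "\<exists>\<sigma>' \<delta>'. (cls D K \<sigma>', \<delta>') \<in> N \<and> final D \<delta>' \<sigma>'"
proof -
  obtain \<delta>' \<sigma>' where run: "trans_star D \<delta> [] \<alpha>s \<delta>' \<sigma>'" and final: "final D \<delta>' \<sigma>'"
    using assms(5) unfolding realization_def by blast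
  have "\<forall>\<omega>. 0 \<le> val D [] \<omega>"
    by (simp add: val_def)
  then obtain \<sigma> where "(cls D K \<sigma>, \<delta>') \<in> N" "sit_eq D K \<sigma> \<sigma>'"
    using trans_star_reaches_succs_closed[OF TS closed run init sit_eq_refl _ \<delta>] by blast
  then show ?thesis
    using final final_sit_eq[OF trans_star_bounded_program[OF run \<delta>]] by blast
qed

end

theorem lemma8:
  fixes D :: "('f, 'g, 'a, 'o, 'v) bat"
    and \<delta> :: "('f, 'g, 'a, 'o, 'v) prog"
    and K :: nat
    and TS :: "('g \<times> 'o list \<Rightarrow> real) \<Rightarrow> nat \<Rightarrow> real set"
  assumes "clocked_bat D"
    and "program D \<delta>"
    and "\<forall>n \<in> bat_nums D \<union> nums_p \<delta>. n \<le> K"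
    and "tsuccs_spec D TS"
    and "alg2_returns D K TS \<delta> V q0 E"
  shows "(\<exists>\<sigma>' \<delta>'. (cls D K \<sigma>', \<delta>') \<in> insert q0 V \<and> (q0, (cls D K \<sigma>', \<delta>')) \<in> E\<^sup>* \<and> final D \<delta>' \<sigma>')
         \<longleftrightarrow> (\<exists>\<alpha>s. realization D \<delta> \<alpha>s)"
proof -
  interpret bounded_clocked_bat D K
    using assms(1,3) by unfold_locales auto
  have \<delta>: "bounded_program D K \<delta>"
    using assms(2,3) by (auto simp: bounded_program_def program_def)
  note graph = alg2_returns_graph[OF assms(5)]
  then have init: "(cls D K [], \<delta>) \<in> insert q0 V"
    by simp
  show ?thesis
  proof
    assume "\<exists>\<sigma>' \<delta>'. (cls D K \<sigma>', \<delta>') \<in> insert q0 V \<and> (q0, (cls D K \<sigma>', \<delta>')) \<in> E\<^sup>* \<and> final D \<delta>' \<sigma>'"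
    then obtain \<sigma>' \<delta>' where "(q0, (cls D K \<sigma>', \<delta>')) \<in> E\<^sup>*" "final D \<delta>' \<sigma>'"
      by blast
    then show "\<exists>\<alpha>s. realization D \<delta> \<alpha>s"
      using realization_if_abstract_final[OF graph(3) \<delta>] graph(1) by simp
  next
    assume "\<exists>\<alpha>s. realization D \<delta> \<alpha>s"
    then obtain \<sigma>' \<delta>' where "(cls D K \<sigma>', \<delta>') \<in> insert q0 V" "final D \<delta>' \<sigma>'"
      using abstract_final_if_realization[OF assms(4) graph(4) init \<delta>] by blast
    then show "\<exists>\<sigma>' \<delta>'. (cls D K \<sigma>', \<delta>') \<in> insert q0 V \<and> (q0, (cls D K \<sigma>', \<delta>')) \<in> E\<^sup>* \<and> final D \<delta>' \<sigma>'"
      using graph(2) by blast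
  qed
qed

end
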